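(* Thompson's group $T$ has exponential conjugacy growth.
   Context: Let $\mathfrak{C}=\{0,1\}^\omega$ be the Cantor space with the product topology. For $w_1,w_2\in\{0,1\}^*$, a homeomorphism maps $w_1\mathfrak{C}$ rigidly to $w_2\mathfrak{C}$ if it restricts to $w_1y\mapsto w_2y$. Thompson's group $V$ is the group of homeomorphisms $v$ of $\mathfrak{C}$ such that every $x\in\mathfrak{C}$ lies in a cone $w\mathfrak{C}$ that $v$ maps rigidly onto some cone; Thompson's group $T\le V$ is the subgroup of those elements preserving the cyclic order on $\mathfrak{C}$ induced by the lexicographic order. $T$ is finitely generated. The conjugacy growth function of a finitely generated group with finite generating set $\Sigma$ sends $n$ to the number of conjugacy classes containing an element of word length at most $n$; exponential means it is equivalent to $n\mapsto 2^n$ under the relation $f\sim g$ iff $f\preccurlyeq g$ and $g\preccurlyeq f$, where $f\preccurlyeq g$ means there is $\lambda\in\mathbb{N}\setminus\{0\}$ with $f(n)\le\lambda g(\lambda n+\lambda)+\lambda$ for all $n$ (this is independent of $\Sigma$). *)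

theory Defs
  imports "HOL-Analysis.Analysis"
begin

type_synonym cantor = "nat \<Rightarrow> bool"

definition cantor_top :: "cantor topology" where
  "cantor_top = product_topology (\<lambda>_. discrete_topology (UNIV :: bool set)) UNIV"

definition cat :: "bool list \<Rightarrow> cantor \<Rightarrow> cantor" where
  "cat w y = (\<lambda>n. if n < length w then w ! n else y (n - length w))"

definition cone :: "bool list \<Rightarrow> cantor set" where
  "cone w = range (cat w)"

definition maps_rigidly :: "(cantor \<Rightarrow> cantor) \<Rightarrow> bool list \<Rightarrow> bool list \<Rightarrow> bool" where
  "maps_rigidly v w1 w2 \<longleftrightarrow> (\<forall>y. v (cat w1 y) = cat w2 y)"

definition ThompsonV :: "(cantor \<Rightarrow> cantor) set" where
  "ThompsonV = {v. homeomorphic_map cantor_top cantor_top v \<and>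
      (\<forall>x. \<exists>w1 w2. x \<in> cone w1 \<and> maps_rigidly v w1 w2)}"

definition lex_less :: "cantor \<Rightarrow> cantor \<Rightarrow> bool" where
  "lex_less x y \<longleftrightarrow> (\<exists>n. (\<forall>i<n. x i = y i) \<and> \<not> x n \<and> y n)"

definition cyc :: "cantor \<Rightarrow> cantor \<Rightarrow> cantor \<Rightarrow> bool" where
  "cyc a b c \<longleftrightarrow> (lex_less a b \<and> lex_less b c) \<or> (lex_less b c \<and> lex_less c a)
                 \<or> (lex_less c a \<and> lex_less a b)"

definition ThompsonT :: "(cantor \<Rightarrow> cantor) set" where
  "ThompsonT = {v \<in> ThompsonV. \<forall>a b c. cyc a b c \<longrightarrow> cyc (v a) (v b) (v c)}"

definition words_over :: "('a \<Rightarrow> 'a) set \<Rightarrow> ('a \<Rightarrow> 'a) list set" where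
  "words_over S = lists (S \<union> inv ` S)"

definition eval_word :: "('a \<Rightarrow> 'a) list \<Rightarrow> 'a \<Rightarrow> 'a" where
  "eval_word ws = foldr (\<circ>) ws id"

definition generates :: "('a \<Rightarrow> 'a) set \<Rightarrow> ('a \<Rightarrow> 'a) set \<Rightarrow> bool" where
  "generates S G \<longleftrightarrow> S \<subseteq> G \<and> (\<forall>g\<in>G. \<exists>ws\<in>words_over S. eval_word ws = g)"

definition word_length :: "('a \<Rightarrow> 'a) set \<Rightarrow> ('a \<Rightarrow> 'a) \<Rightarrow> nat" where
  "word_length S g = (LEAST n. \<exists>ws\<in>words_over S. length ws = n \<and> eval_word ws = g)"

definition conj_class :: "('a \<Rightarrow> 'a) set \<Rightarrow> ('a \<Rightarrow> 'a) \<Rightarrow> ('a \<Rightarrow> 'a) set" where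
  "conj_class G g = {h \<circ> g \<circ> inv h | h. h \<in> G}"

definition conj_growth :: "('a \<Rightarrow> 'a) set \<Rightarrow> ('a \<Rightarrow> 'a) set \<Rightarrow> nat \<Rightarrow> nat" where
  "conj_growth G S n = card {conj_class G g | g. g \<in> G \<and> word_length S g \<le> n}"

definition growth_le :: "(nat \<Rightarrow> nat) \<Rightarrow> (nat \<Rightarrow> nat) \<Rightarrow> bool" where
  "growth_le f g \<longleftrightarrow> (\<exists>c::nat. c \<noteq> 0 \<and> (\<forall>n. f n \<le> c * g (c * n + c) + c))"

definition growth_equiv :: "(nat \<Rightarrow> nat) \<Rightarrow> (nat \<Rightarrow> nat) \<Rightarrow> bool" where
  "growth_equiv f g \<longleftrightarrow> growth_le f g \<and> growth_le g f"

end

(*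
  Finite generation: every element of T is the prefix replacement map between two complete
  prefix codes with the same number of leaves, composed with a cyclic rotation of the leaves.
  Any complete code can be reduced to the right comb by tree rotations, i.e. copies of x0
  acting below some address, which are conjugates of x1 by products of c0 and x0, inv x0;
  rotations of the leaves reduce to the half-turn c0 by conjugation.

  Upper bound: in any finitely generated group the ball of radius n, and hence the set of
  conjugacy classes meeting it, has at most exponentially many elements.

  Lower bound: for a sign vector u of length n, the element rung_map u acts as x0 or its
  inverse on each of the cones 0^i 1 (1 <= i <= n) and trivially elsewhere; it has word length
  O(n).  A conjugator in T preserves the cyclic order, fixed points and the direction in which
  points move between consecutive fixed points, so it permutes these n cones by a rotation and
  carries the signs along.  Hence each conjugacy class contains at most n of the 2^n elements
  rung_map u, and the ball of radius O(n) meets at least 2^n / n conjugacy classes.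
*)
theory Submission
  imports Defs
begin

section \<open>Word length and conjugacy growth in groups of bijections\<close>

lemma eval_word_Nil [simp]: "eval_word [] = id"
  unfolding eval_word_def by (simp only: foldr_Nil id_apply)

lemma eval_word_Cons [simp]: "eval_word (a # ws) = a \<circ> eval_word ws"
  by (simp add: eval_word_def)

lemma eval_word_append: "eval_word (xs @ ys) = eval_word xs \<circ> eval_word ys"
  by (induction xs) (auto simp: comp_assoc)

lemma words_over_append: "xs \<in> words_over S \<Longrightarrow> ys \<in> words_over S \<Longrightarrow> xs @ ys \<in> words_over S"
  by (simp add: words_over_def)

definition generated :: "('a \<Rightarrow> 'a) set \<Rightarrow> ('a \<Rightarrow> 'a) set" where
  "generated S = {eval_word ws | ws. ws \<in> words_over S}"

lemma generated_id: "id \<in> generated S"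
  unfolding generated_def words_over_def by (intro CollectI exI[of _ "[]"]) simp

lemma generated_gen: "s \<in> S \<Longrightarrow> s \<in> generated S"
  unfolding generated_def words_over_def by (intro CollectI exI[of _ "[s]"]) simp

lemma generated_inv_gen: "s \<in> S \<Longrightarrow> inv s \<in> generated S"
  unfolding generated_def words_over_def by (intro CollectI exI[of _ "[inv s]"]) simp

lemma generated_comp: "f \<in> generated S \<Longrightarrow> g \<in> generated S \<Longrightarrow> f \<circ> g \<in> generated S"
  unfolding generated_def by (auto simp flip: eval_word_append intro: words_over_append)

lemma generated_induct [consumes 1, case_names id gen]:
  assumes "f \<in> generated S" "P id"
    and "\<And>a g. a \<in> S \<union> inv ` S \<Longrightarrow> g \<in> generated S \<Longrightarrow> P g \<Longrightarrow> P (a \<circ> g)"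
  shows "P f"
proof -
  obtain ws where ws: "ws \<in> words_over S" "f = eval_word ws"
    using assms(1) by (auto simp: generated_def)
  have "P (eval_word ws)"
    using ws(1)
  proof (induction ws)
    case (Cons a ws)
    then have "a \<in> S \<union> inv ` S" "ws \<in> words_over S" by (auto simp: words_over_def)
    moreover from this(2) have "eval_word ws \<in> generated S" by (auto simp: generated_def)
    ultimately show ?case unfolding eval_word_Cons using assms(3) Cons.IH by blast
  qed (simp add: assms(2))
  then show ?thesis using ws(2) by simp
qed

lemma generated_bij:
  assumes "\<And>s. s \<in> S \<Longrightarrow> bij s" "f \<in> generated S"
  shows "bij f"
  using assms(2)
proof (induction rule: generated_induct)
  case (gen a g)
  then have "bij a" using assms(1) bij_imp_bij_inv by auto
  with gen.IH show ?case by (rule bij_comp)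
qed (simp add: bij_id[unfolded id_def])

lemma generated_inv:
  assumes "\<And>s. s \<in> S \<Longrightarrow> bij s" "f \<in> generated S"
  shows "inv f \<in> generated S"
  using assms(2)
proof (induction rule: generated_induct)
  case id
  show ?case using generated_id by (simp add: id_def)
next
  case (gen a g)
  have "inv a \<in> generated S"
    using gen.hyps(1) assms(1) by (auto simp: inv_inv_eq generated_gen generated_inv_gen)
  moreover have "inv (a \<circ> g) = inv g \<circ> inv a"
    using gen.hyps assms(1) by (intro o_inv_distrib) (auto intro: bij_imp_bij_inv generated_bij)
  ultimately show ?case using gen.IH by (simp only: generated_comp)
qed

lemma word_length_attained:
  assumes "generates S G" "g \<in> G"
  shows "\<exists>ws\<in>words_over S. length ws = word_length S g \<and> eval_word ws = g"
proof -
  have "\<exists>n ws. ws \<in> words_over S \<and> length ws = n \<and> eval_word ws = g"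
    using assms unfolding generates_def by blast
  then show ?thesis unfolding word_length_def
    using LeastI_ex[of "\<lambda>n. \<exists>ws\<in>words_over S. length ws = n \<and> eval_word ws = g"] by blast
qed

lemma word_length_le:
  assumes "ws \<in> words_over S" "eval_word ws = g"
  shows "word_length S g \<le> length ws"
  unfolding word_length_def using assms by (intro Least_le) blast

lemma word_length_id: "word_length S id = 0"
  using word_length_le[of "[]" S id] by (simp add: words_over_def)

lemma word_length_comp:
  assumes "generates S G" "f \<in> G" "g \<in> G"
  shows "word_length S (f \<circ> g) \<le> word_length S f + word_length S g"
proof -
  obtain ws where ws: "ws \<in> words_over S" "length ws = word_length S f" "eval_word ws = f"
    using word_length_attained[OF assms(1,2)] by blast
  obtain vs where vs: "vs \<in> words_over S" "length vs = word_length S g" "eval_word vs = g"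
    using word_length_attained[OF assms(1,3)] by blast
  have "word_length S (f \<circ> g) \<le> length (ws @ vs)"
    by (rule word_length_le) (use ws vs in \<open>auto simp: words_over_append eval_word_append\<close>)
  then show ?thesis using ws vs by simp
qed

definition word_ball :: "('a \<Rightarrow> 'a) set \<Rightarrow> ('a \<Rightarrow> 'a) set \<Rightarrow> nat \<Rightarrow> ('a \<Rightarrow> 'a) set" where
  "word_ball G S n = {g \<in> G. word_length S g \<le> n}"

lemma word_ball_subset_eval_words:
  assumes "generates S G"
  shows "word_ball G S n \<subseteq> eval_word ` {xs. set xs \<subseteq> S \<union> inv ` S \<and> length xs \<le> n}"
proof
  fix g assume "g \<in> word_ball G S n"
  then have g: "g \<in> G" "word_length S g \<le> n" by (auto simp: word_ball_def)
  obtain ws where "ws \<in> words_over S" "length ws = word_length S g" "eval_word ws = g"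
    using word_length_attained[OF assms g(1)] by blast
  then show "g \<in> eval_word ` {xs. set xs \<subseteq> S \<union> inv ` S \<and> length xs \<le> n}"
    using g(2) by (auto simp: words_over_def)
qed

lemma sum_powers_le_Suc_power: "(\<Sum>i\<le>n. (k::nat) ^ i) \<le> (k + 1) ^ n"
proof (induction n)
  case (Suc n)
  have "(\<Sum>i\<le>Suc n. k ^ i) \<le> (k + 1) ^ n + k * (k + 1) ^ n"
    using Suc power_mono[of k "k + 1" n] by (simp add: add_mono)
  then show ?case by simp
qed simp

lemma
  assumes "finite S" "generates S G"
  shows finite_word_ball: "finite (word_ball G S n)"
    and card_word_ball_le: "card (word_ball G S n) \<le> (card (S \<union> inv ` S) + 1) ^ n"
proof -
  let ?W = "{xs. set xs \<subseteq> S \<union> inv ` S \<and> length xs \<le> n}"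
  have fin: "finite ?W" using assms(1) finite_lists_length_le[of "S \<union> inv ` S" n] by auto
  then show "finite (word_ball G S n)"
    using finite_subset[OF word_ball_subset_eval_words[OF assms(2)]] by blast
  have "card (word_ball G S n) \<le> card (eval_word ` ?W)"
    using card_mono[OF _ word_ball_subset_eval_words[OF assms(2)]] fin by blast
  also have "\<dots> \<le> card ?W" using fin by (rule card_image_le)
  also have "\<dots> = (\<Sum>i\<le>n. card (S \<union> inv ` S) ^ i)"
    by (rule card_lists_length_le) (use assms(1) in auto)
  also have "\<dots> \<le> (card (S \<union> inv ` S) + 1) ^ n" by (rule sum_powers_le_Suc_power)
  finally show "card (word_ball G S n) \<le> (card (S \<union> inv ` S) + 1) ^ n" .
qed

lemma conj_class_self: "id \<in> G \<Longrightarrow> g \<in> conj_class G g"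
  unfolding conj_class_def by (intro CollectI exI[of _ id]) simp

lemma conj_growth_eq_card_image: "conj_growth G S n = card (conj_class G ` word_ball G S n)"
proof -
  have "{conj_class G g |g. g \<in> G \<and> word_length S g \<le> n} = conj_class G ` word_ball G S n"
    unfolding word_ball_def by blast
  then show ?thesis unfolding conj_growth_def by simp
qed

lemma conj_growth_mono:
  assumes "finite S" "generates S G" "n \<le> m"
  shows "conj_growth G S n \<le> conj_growth G S m"
  unfolding conj_growth_eq_card_image
  using assms(3) finite_word_ball[OF assms(1,2)]
  by (intro card_mono image_mono) (auto simp: word_ball_def)

theorem conj_growth_at_most_exponential:
  assumes "finite S" "generates S G"
  shows "growth_le (conj_growth G S) (\<lambda>n. 2 ^ n)"
proof -
  define c where "c = card (S \<union> inv ` S) + 1"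
  have "conj_growth G S n \<le> c * 2 ^ (c * n + c) + c" for n
  proof -
    have "conj_growth G S n \<le> card (word_ball G S n)"
      unfolding conj_growth_eq_card_image by (rule card_image_le[OF finite_word_ball[OF assms]])
    also have "\<dots> \<le> c ^ n" unfolding c_def by (rule card_word_ball_le[OF assms])
    also have "\<dots> \<le> (2 ^ c) ^ n" by (rule power_mono) (simp_all add: less_exp less_imp_le)
    also have "\<dots> = 2 ^ (c * n)" by (simp add: power_mult)
    also have "\<dots> \<le> 2 ^ (c * n + c)" by (rule power_increasing) simp_all
    also have "\<dots> \<le> c * 2 ^ (c * n + c) + c" by (simp add: c_def)
    finally show ?thesis .
  qed
  then show ?thesis unfolding growth_le_def c_def by (intro exI[of _ c]) (auto simp: c_def)
qed

lemma card_le_mult_card_image: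
  assumes "finite A" "\<And>y. y \<in> f ` A \<Longrightarrow> card {x\<in>A. f x = y} \<le> k"
  shows "card A \<le> k * card (f ` A)"
proof -
  have "card A = card (\<Union>y\<in>f ` A. {x\<in>A. f x = y})" by (rule arg_cong[of _ _ card]) auto
  also have "\<dots> \<le> (\<Sum>y\<in>f ` A. card {x\<in>A. f x = y})" by (rule card_UN_le) (simp add: assms(1))
  also have "\<dots> \<le> (\<Sum>y\<in>f ` A. k)" by (rule sum_mono) (use assms(2) in auto)
  finally show ?thesis by (simp add: mult.commute)
qed

lemma card_le_mult_conj_growth:
  assumes "finite S" "generates S G" "finite U"
    and "\<And>u. u \<in> U \<Longrightarrow> F u \<in> word_ball G S L"
    and "\<And>u. u \<in> U \<Longrightarrow> card {v \<in> U. conj_class G (F v) = conj_class G (F u)} \<le> k"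
  shows "card U \<le> k * conj_growth G S L"
proof -
  have "card U \<le> k * card ((\<lambda>u. conj_class G (F u)) ` U)"
    by (rule card_le_mult_card_image) (use assms(3,5) in auto)
  also have "card ((\<lambda>u. conj_class G (F u)) ` U) \<le> card (conj_class G ` word_ball G S L)"
    using assms(4) finite_word_ball[OF assms(1,2)] by (intro card_mono) auto
  finally show ?thesis
    unfolding conj_growth_eq_card_image by (simp add: mult_le_mono2 order_trans)
qed

lemma exponential_le_growth:
  fixes f :: "nat \<Rightarrow> nat"
  assumes "mono f" "\<And>n. 1 \<le> n \<Longrightarrow> 2 ^ n \<le> n * f (K * n)"
  shows "growth_le (\<lambda>n. 2 ^ n) f"
proof -
  define c where "c = 2 * K + 1"
  have "2 ^ n \<le> c * f (c * n + c) + c" for n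
  proof -
    define m where "m = n + (n + 2)"
    have "2 ^ (n + 2) * 2 ^ n = (2::nat) ^ m" by (simp add: m_def power_add)
    also have "\<dots> \<le> m * f (K * m)" using assms(2)[of m] by (simp add: m_def)
    also have "\<dots> \<le> 2 ^ (n + 2) * f (c * n + c)"
    proof (rule mult_le_mono)
      show "m \<le> 2 ^ (n + 2)" using less_exp[of "n + 1"] by (simp add: m_def)
      show "f (K * m) \<le> f (c * n + c)"
        by (rule monoD[OF assms(1)]) (simp add: m_def c_def algebra_simps)
    qed
    finally have "2 ^ n \<le> f (c * n + c)" by simp
    then show ?thesis by (simp add: c_def trans_le_add1)
  qed
  then show ?thesis unfolding growth_le_def c_def by (intro exI[of _ c]) (auto simp: c_def)
qed

section \<open>Cyclic-order-preserving permutations of \<open>{1..n}\<close>\<close>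

text \<open>The cyclic order of the descending order; it is the order in which the cones \<open>0\<^sup>i1\<close> occur
  in Cantor space.\<close>

definition cyc_desc :: "nat \<Rightarrow> nat \<Rightarrow> nat \<Rightarrow> bool" where
  "cyc_desc i j k \<longleftrightarrow> (j < i \<and> k < j) \<or> (k < j \<and> i < k) \<or> (i < k \<and> j < i)"

lemma cyc_desc_asym: "cyc_desc a b c \<Longrightarrow> \<not> cyc_desc a c b"
  by (auto simp: cyc_desc_def)

lemma cyc_desc_total: "a \<noteq> b \<Longrightarrow> b \<noteq> c \<Longrightarrow> a \<noteq> c \<Longrightarrow> cyc_desc a b c \<or> cyc_desc a c b"
  by (auto simp: cyc_desc_def)

lemma cyc_desc_distinct: "cyc_desc a b c \<Longrightarrow> a \<noteq> b \<and> b \<noteq> c \<and> a \<noteq> c"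
  by (auto simp: cyc_desc_def)

definition cyc_perm :: "nat \<Rightarrow> (nat \<Rightarrow> nat) \<Rightarrow> bool" where
  "cyc_perm n p \<longleftrightarrow> (\<forall>i\<in>{1..n}. p i \<in> {1..n}) \<and> inj_on p {1..n} \<and>
     (\<forall>i\<in>{1..n}. \<forall>j\<in>{1..n}. \<forall>k\<in>{1..n}. cyc_desc i j k \<longrightarrow> cyc_desc (p i) (p j) (p k))"

lemma cyc_perm_image: "cyc_perm n p \<Longrightarrow> p ` {1..n} = {1..n}"
  unfolding cyc_perm_def by (intro endo_inj_surj) auto

lemma cyc_perm_comp:
  assumes "cyc_perm n p" "cyc_perm n q"
  shows "cyc_perm n (q \<circ> p)"
proof -
  have "inj_on (q \<circ> p) {1..n}"
    using assms cyc_perm_image[OF assms(1)] by (intro comp_inj_on) (simp_all add: cyc_perm_def)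
  then show ?thesis using assms unfolding cyc_perm_def by simp
qed

lemma cyc_perm_inv_into:
  assumes "cyc_perm n q"
  shows "cyc_perm n (inv_into {1..n} q)"
proof -
  let ?t = "inv_into {1..n} q"
  have inj: "inj_on q {1..n}" using assms by (simp add: cyc_perm_def)
  have onto: "q ` {1..n} = {1..n}" using assms by (rule cyc_perm_image)
  have qt: "q (?t a) = a" and tA: "?t a \<in> {1..n}" if "a \<in> {1..n}" for a
    using onto that by (metis f_inv_into_f, metis inv_into_into)
  have "cyc_desc (?t a) (?t b) (?t c)"
    if abc: "a \<in> {1..n}" "b \<in> {1..n}" "c \<in> {1..n}" "cyc_desc a b c" for a b c
  proof (rule ccontr)
    have "?t a \<noteq> ?t b" "?t b \<noteq> ?t c" "?t a \<noteq> ?t c"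
      using cyc_desc_distinct[OF abc(4)] qt abc(1-3) by metis+
    moreover assume "\<not> cyc_desc (?t a) (?t b) (?t c)"
    ultimately have "cyc_desc (?t a) (?t c) (?t b)" using cyc_desc_total by blast
    then have "cyc_desc a c b"
      using assms tA qt abc(1-3) unfolding cyc_perm_def by metis
    then show False using cyc_desc_asym abc(4) by blast
  qed
  moreover have "inj_on ?t {1..n}" using onto by (metis inj_on_inv_into order_refl)
  ultimately show ?thesis unfolding cyc_perm_def using tA by blast
qed

lemma strict_mono_on_self_id:
  fixes f :: "nat \<Rightarrow> nat"
  assumes "\<And>i. a \<le> i \<Longrightarrow> i \<le> b \<Longrightarrow> a \<le> f i \<and> f i \<le> b"
    "\<And>i j. a \<le> i \<Longrightarrow> i < j \<Longrightarrow> j \<le> b \<Longrightarrow> f i < f j"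
  shows "a \<le> i \<Longrightarrow> i \<le> b \<Longrightarrow> f i = i"
proof -
  have up: "a + d \<le> b \<Longrightarrow> a + d \<le> f (a + d)" for d
  proof (induction d)
    case 0 then show ?case using assms(1)[of a] by simp
  next
    case (Suc d)
    then have "f (a + d) < f (a + Suc d)" using assms(2)[of "a + d" "a + Suc d"] by simp
    then show ?case using Suc by simp
  qed
  have down: "a + d \<le> b \<Longrightarrow> f (b - d) \<le> b - d" for d
  proof (induction d)
    case 0 then show ?case using assms(1)[of b] by simp
  next
    case (Suc d)
    then have "f (b - Suc d) < f (b - d)" using assms(2)[of "b - Suc d" "b - d"] by simp
    then show ?case using Suc by simp
  qed
  assume i: "a \<le> i" "i \<le> b"
  have "i \<le> f i" using up[of "i - a"] i by simp
  moreover have "f i \<le> i" using down[of "b - i"] i by simp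
  ultimately show "f i = i" by simp
qed

text \<open>Fixing \<open>1\<close>, cyclic order on \<open>{2..n}\<close> becomes linear order, so the map is strictly monotone there.\<close>

lemma cyc_perm_fixing_1:
  assumes "cyc_perm n s" "s 1 = 1" "i \<in> {1..n}"
  shows "s i = i"
proof (cases "i = 1")
  case False
  have inj: "inj_on s {1..n}" and range: "\<And>i. i \<in> {1..n} \<Longrightarrow> s i \<in> {1..n}"
    using assms(1) by (auto simp: cyc_perm_def)
  have range2: "2 \<le> s j \<and> s j \<le> n" if "2 \<le> j" "j \<le> n" for j
    using range[of j] inj_onD[OF inj, of j 1] assms(2) that by fastforce
  have "s j < s k" if "2 \<le> j" "j < k" "k \<le> n" for j k
  proof -
    have "cyc_desc k j 1" using that by (simp add: cyc_desc_def)
    then have "cyc_desc (s k) (s j) (s 1)" using assms(1) that unfolding cyc_perm_def by simp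
    then show ?thesis using assms(2) range2[of j] range2[of k] that by (auto simp: cyc_desc_def)
  qed
  then show ?thesis
    using strict_mono_on_self_id[of 2 n s i] range2 False assms(3) by fastforce
qed (use assms in simp)

lemma cyc_perm_unique:
  assumes "cyc_perm n p" "cyc_perm n q" "p 1 = q 1" "1 \<le> n"
  shows "\<forall>i\<in>{1..n}. p i = q i"
proof
  fix i assume i: "i \<in> {1..n}"
  let ?t = "inv_into {1..n} q"
  have s: "cyc_perm n (?t \<circ> p)" using cyc_perm_comp[OF assms(1) cyc_perm_inv_into[OF assms(2)]] .
  have inj: "inj_on q {1..n}" using assms(2) by (simp add: cyc_perm_def)
  have "(?t \<circ> p) 1 = 1" using assms(3,4) inv_into_f_f[OF inj] by simp
  then have "?t (p i) = i" using cyc_perm_fixing_1[OF s _ i] by simp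
  moreover have "p i \<in> {1..n}" using assms(1) i unfolding cyc_perm_def by blast
  then have "p i \<in> q ` {1..n}" using cyc_perm_image[OF assms(2)] by simp
  ultimately show "p i = q i" by (metis f_inv_into_f)
qed

section \<open>Cones and the lexicographic and cyclic orders\<close>

definition sdrop :: "nat \<Rightarrow> cantor \<Rightarrow> cantor" where
  "sdrop k x = (\<lambda>n. x (n + k))"

lemma cone_iff: "x \<in> cone w \<longleftrightarrow> (\<forall>i<length w. x i = w ! i)"
proof
  assume "x \<in> cone w" then obtain y where "x = cat w y" by (auto simp: cone_def)
  then show "\<forall>i<length w. x i = w ! i" by (auto simp: cat_def)
next
  assume a: "\<forall>i<length w. x i = w ! i"
  have "x = cat w (sdrop (length w) x)"
    using a by (auto simp: cat_def sdrop_def fun_eq_iff)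
  then show "x \<in> cone w" by (auto simp: cone_def)
qed

lemma cat_in_cone [simp]: "cat w y \<in> cone w"
  by (auto simp: cone_def)

lemma cat_sdrop: "x \<in> cone w \<Longrightarrow> cat w (sdrop (length w) x) = x"
  by (auto simp: cone_iff cat_def sdrop_def fun_eq_iff)

lemma sdrop_cat [simp]: "sdrop (length w) (cat w y) = y"
  by (auto simp: cat_def sdrop_def fun_eq_iff)

lemma cat_inj [simp]: "cat w y = cat w z \<longleftrightarrow> y = z"
  by (metis sdrop_cat)

lemma cone_Nil [simp]: "cone [] = UNIV"
  by (auto simp: cone_iff)

lemma cat_append: "cat (u @ v) y = cat u (cat v y)"
  by (auto simp: cat_def fun_eq_iff nth_append)

lemma cat_Cons: "cat (a # v) y = cat [a] (cat v y)"
  using cat_append[of "[a]" v y] by simp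

lemma cat_in_cone_append_iff [simp]: "cat w y \<in> cone (w @ v) \<longleftrightarrow> y \<in> cone v"
  by (auto simp: cone_iff cat_def nth_append)

lemma cone_append_sub: "cone (u @ v) \<subseteq> cone u"
  by (auto simp: cone_iff nth_append)

lemma cones_meet_prefix:
  assumes "x \<in> cone p" "x \<in> cone q" "length p \<le> length q"
  shows "p = take (length p) q"
  using assms by (intro nth_equalityI) (auto simp: cone_iff)

lemma cone_nonempty: "cone w \<noteq> {}"
  using cat_in_cone by blast

lemma lex_less_irrefl [simp]: "\<not> lex_less x x"
  by (auto simp: lex_less_def)

lemma lex_less_trans:
  assumes "lex_less x y" "lex_less y z" shows "lex_less x z"
proof -
  obtain n where n: "\<forall>i<n. x i = y i" "\<not> x n" "y n" using assms(1) by (auto simp: lex_less_def)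
  obtain m where m: "\<forall>i<m. y i = z i" "\<not> y m" "z m" using assms(2) by (auto simp: lex_less_def)
  have "n \<noteq> m" using n m by auto
  show ?thesis
  proof (cases "n < m")
    case True
    then show ?thesis using n m unfolding lex_less_def
      by (intro exI[of _ n]) auto
  next
    case False
    then have "m < n" using \<open>n \<noteq> m\<close> by simp
    then show ?thesis using n m unfolding lex_less_def
      by (intro exI[of _ m]) auto
  qed
qed

lemma lex_less_asym: "lex_less x y \<Longrightarrow> \<not> lex_less y x"
  using lex_less_trans lex_less_irrefl by blast

lemma lex_less_total:
  assumes "x \<noteq> y" shows "lex_less x y \<or> lex_less y x"
proof -
  have "\<exists>i. x i \<noteq> y i" using assms by auto
  define n where "n = (LEAST i. x i \<noteq> y i)"
  have d: "x n \<noteq> y n" unfolding n_def by (rule LeastI_ex) fact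
  have e: "\<forall>i<n. x i = y i" unfolding n_def using not_less_Least by blast
  show ?thesis using d e unfolding lex_less_def by (cases "x n") auto
qed

lemma lex_less_cat [simp]: "lex_less (cat w y) (cat w z) \<longleftrightarrow> lex_less y z"
proof
  assume "lex_less (cat w y) (cat w z)"
  then obtain n where n: "\<forall>i<n. cat w y i = cat w z i" "\<not> cat w y n" "cat w z n"
    by (auto simp: lex_less_def)
  have "n \<ge> length w" using n by (auto simp: cat_def split: if_splits)
  have "\<forall>i<n - length w. y i = z i"
  proof (intro allI impI)
    fix i assume "i < n - length w"
    then have "cat w y (i + length w) = cat w z (i + length w)" using n(1) by auto
    then show "y i = z i" by (simp add: cat_def)
  qed
  then show "lex_less y z" unfolding lex_less_def using n \<open>n \<ge> length w\<close>
    by (intro exI[of _ "n - length w"]) (auto simp: cat_def)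
next
  assume "lex_less y z"
  then obtain n where n: "\<forall>i<n. y i = z i" "\<not> y n" "z n"
    by (auto simp: lex_less_def)
  show "lex_less (cat w y) (cat w z)" unfolding lex_less_def using n
    by (intro exI[of _ "n + length w"]) (auto simp: cat_def)
qed

lemma lex_less_split:
  assumes "x \<in> cone (w @ [False] @ p)" "y \<in> cone (w @ [True] @ q)"
  shows "lex_less x y"
  using assms unfolding lex_less_def cone_iff
  apply (intro exI[of _ "length w"])
  by (auto simp: nth_append)

lemma lex_less_split':
  assumes "x \<in> cone (w @ [False])" "y \<in> cone (w @ [True])"
  shows "lex_less x y"
  using lex_less_split[of x w "[]" y "[]"] assms by simp

definition zeros :: cantor where "zeros = (\<lambda>_. False)"
definition ones :: cantor where "ones = (\<lambda>_. True)"

lemma zeros_least: "x \<noteq> zeros \<Longrightarrow> lex_less zeros x"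
proof -
  assume "x \<noteq> zeros"
  then have "lex_less zeros x \<or> lex_less x zeros" using lex_less_total by blast
  moreover have "\<not> lex_less x zeros" by (auto simp: lex_less_def zeros_def)
  ultimately show ?thesis by blast
qed

lemma ones_greatest: "x \<noteq> ones \<Longrightarrow> lex_less x ones"
proof -
  assume "x \<noteq> ones"
  then have "lex_less ones x \<or> lex_less x ones" using lex_less_total by metis
  moreover have "\<not> lex_less ones x" by (auto simp: lex_less_def ones_def)
  ultimately show ?thesis by blast
qed

lemma not_cone_first_diff:
  assumes "p \<notin> cone w"
  shows "\<exists>i<length w. (\<forall>j<i. p j = w ! j) \<and> p i \<noteq> w ! i"
proof -
  have ex: "\<exists>i. i < length w \<and> p i \<noteq> w ! i" using assms by (auto simp: cone_iff)
  define i where "i = (LEAST i. i < length w \<and> p i \<noteq> w ! i)"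
  have i: "i < length w \<and> p i \<noteq> w ! i" unfolding i_def by (rule LeastI_ex[OF ex])
  have "\<forall>j<i. p j = w ! j"
  proof (intro allI impI)
    fix j assume "j < i"
    then have "\<not> (j < length w \<and> p j \<noteq> w ! j)" unfolding i_def using not_less_Least by blast
    then show "p j = w ! j" using \<open>j < i\<close> i by auto
  qed
  then show ?thesis using i by blast
qed

lemma cone_outside:
  assumes "p \<notin> cone w"
  shows "(\<forall>z\<in>cone w. lex_less p z) \<or> (\<forall>z\<in>cone w. lex_less z p)"
proof -
  obtain i where i: "i < length w" "\<forall>j<i. p j = w ! j" "p i \<noteq> w ! i"
    using not_cone_first_diff[OF assms] by blast
  show ?thesis
  proof (cases "p i")
    case True
    then have "\<forall>z\<in>cone w. lex_less z p" using i unfolding lex_less_def cone_iff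
      by (intro ballI exI[of _ i]) (auto simp: cone_iff)
    then show ?thesis by blast
  next
    case False
    then have "\<forall>z\<in>cone w. lex_less p z" using i unfolding lex_less_def cone_iff
      by (intro ballI exI[of _ i]) (auto simp: cone_iff)
    then show ?thesis by blast
  qed
qed

lemma cone_interval:
  assumes "x \<in> cone w" "y \<in> cone w" "lex_less x p" "lex_less p y"
  shows "p \<in> cone w"
  using cone_outside[of p w] assms lex_less_asym by blast

lemma cone_min: "z \<in> cone w \<Longrightarrow> z \<noteq> cat w zeros \<Longrightarrow> lex_less (cat w zeros) z"
  by (metis cat_sdrop lex_less_cat zeros_least)

lemma cone_max: "z \<in> cone w \<Longrightarrow> z \<noteq> cat w ones \<Longrightarrow> lex_less z (cat w ones)"
  by (metis cat_sdrop lex_less_cat ones_greatest)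

lemma cyc_distinct: "cyc a b c \<Longrightarrow> a \<noteq> b \<and> b \<noteq> c \<and> a \<noteq> c"
  by (auto simp: cyc_def dest: lex_less_asym)

lemma cyc_asym: "cyc a b c \<Longrightarrow> \<not> cyc a c b"
  unfolding cyc_def by (meson lex_less_asym lex_less_trans)

lemma cyc_total: "a \<noteq> b \<Longrightarrow> b \<noteq> c \<Longrightarrow> a \<noteq> c \<Longrightarrow> cyc a b c \<or> cyc a c b"
  unfolding cyc_def by (meson lex_less_total)

definition cyc_preserving :: "(cantor \<Rightarrow> cantor) \<Rightarrow> bool" where
  "cyc_preserving h \<longleftrightarrow> (\<forall>a b c. cyc a b c \<longrightarrow> cyc (h a) (h b) (h c))"

lemma cyc_preserving_iff:
  assumes "inj h" "cyc_preserving h"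
  shows "cyc (h a) (h b) (h c) \<longleftrightarrow> cyc a b c"
proof
  assume H: "cyc (h a) (h b) (h c)"
  then have "a \<noteq> b \<and> b \<noteq> c \<and> a \<noteq> c" using cyc_distinct by metis
  then have "cyc a b c \<or> cyc a c b" using cyc_total by blast
  moreover have "\<not> cyc a c b"
    using H assms(2) cyc_asym unfolding cyc_preserving_def by blast
  ultimately show "cyc a b c" by blast
qed (use assms in \<open>auto simp: cyc_preserving_def\<close>)

lemma mono_cyc_preserving:
  assumes "\<And>x y. lex_less x y \<Longrightarrow> lex_less (f x) (f y)"
  shows "cyc_preserving f"
  using assms unfolding cyc_preserving_def cyc_def by blast

section \<open>Prefix replacement maps and complete prefix codes\<close>

definition cover :: "bool list list \<Rightarrow> cantor set" where
  "cover P = (\<Union>p\<in>set P. cone p)"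

definition prefix_free :: "bool list list \<Rightarrow> bool" where
  "prefix_free P \<longleftrightarrow> distinct P \<and> (\<forall>p\<in>set P. \<forall>q\<in>set P. p \<noteq> q \<longrightarrow> cone p \<inter> cone q = {})"

text \<open>The \<open>SOME\<close> below is only determined when \<open>P\<close> is prefix-free.\<close>

definition prefix_map :: "bool list list \<Rightarrow> bool list list \<Rightarrow> cantor \<Rightarrow> cantor" where
  "prefix_map P Q x = (if \<exists>pq\<in>set (zip P Q). x \<in> cone (fst pq)
     then (let pq = SOME pq. pq \<in> set (zip P Q) \<and> x \<in> cone (fst pq)
           in cat (snd pq) (sdrop (length (fst pq)) x))
     else x)"

definition prefixed :: "bool list \<Rightarrow> bool list list \<Rightarrow> bool list list" where
  "prefixed w P = map ((@) w) P"

lemma prefixed_Nil2 [simp]: "prefixed w [] = []" by (simp add: prefixed_def)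
lemma prefixed_Nil [simp]: "prefixed [] P = P" by (induct P) (auto simp: prefixed_def)
lemma prefixed_prefixed [simp]: "prefixed u (prefixed v P) = prefixed (u @ v) P" by (simp add: prefixed_def)
lemma prefixed_append [simp]: "prefixed w (A @ B) = prefixed w A @ prefixed w B" by (simp add: prefixed_def)
lemma prefixed_Cons [simp]: "prefixed w (a # A) = (w @ a) # prefixed w A" by (simp add: prefixed_def)
lemma length_prefixed [simp]: "length (prefixed w P) = length P" by (simp add: prefixed_def)
lemma zip_prefixed: "zip (prefixed u P) (prefixed v Q) = map (\<lambda>(p,q). (u@p, v@q)) (zip P Q)"
  by (simp add: prefixed_def zip_map1 zip_map2 map_map o_def case_prod_beta)

lemma cover_append [simp]: "cover (A @ B) = cover A \<union> cover B"
  by (auto simp: cover_def)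

lemma cover_Cons [simp]: "cover (a # B) = cone a \<union> cover B"
  by (auto simp: cover_def)

lemma cover_Nil [simp]: "cover [] = {}"
  by (auto simp: cover_def)

lemma mem_cover_prefixed: "x \<in> cover (prefixed w P) \<longleftrightarrow> x \<in> cone w \<and> sdrop (length w) x \<in> cover P"
proof
  assume "x \<in> cover (prefixed w P)"
  then obtain p where p: "p \<in> set P" "x \<in> cone (w @ p)" by (auto simp: cover_def prefixed_def)
  then have "x \<in> cone w" using cone_append_sub by blast
  then have "x = cat w (sdrop (length w) x)" by (simp add: cat_sdrop)
  then have "sdrop (length w) x \<in> cone p" using p(2) by (metis cat_in_cone_append_iff)
  then show "x \<in> cone w \<and> sdrop (length w) x \<in> cover P" using p \<open>x \<in> cone w\<close> by (auto simp: cover_def)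
next
  assume "x \<in> cone w \<and> sdrop (length w) x \<in> cover P"
  then obtain p where p: "p \<in> set P" "sdrop (length w) x \<in> cone p" "x \<in> cone w" by (auto simp: cover_def)
  then have "x \<in> cone (w @ p)" by (metis cat_in_cone_append_iff cat_sdrop)
  then show "x \<in> cover (prefixed w P)" using p by (auto simp: cover_def prefixed_def)
qed

lemma cat_mem_cover_prefixed [simp]: "cat w y \<in> cover (prefixed w P) \<longleftrightarrow> y \<in> cover P"
  by (simp add: mem_cover_prefixed)

lemma cover_prefixed_sub: "cover (prefixed w P) \<subseteq> cone w"
  using mem_cover_prefixed by blast

lemma prefix_free_unique:
  assumes "prefix_free P" "length P = length Q" "(p,q) \<in> set (zip P Q)" "(p',q') \<in> set (zip P Q)"
    "x \<in> cone p" "x \<in> cone p'"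
  shows "p = p' \<and> q = q'"
proof -
  obtain i where i: "i < length P" "P ! i = p" "Q ! i = q" using assms(2,3) by (auto simp: in_set_zip)
  obtain j where j: "j < length P" "P ! j = p'" "Q ! j = q'" using assms(2,4) by (auto simp: in_set_zip)
  have "p = p'"
  proof (rule ccontr)
    assume "p \<noteq> p'"
    moreover have "p \<in> set P" "p' \<in> set P" using i j nth_mem by blast+
    ultimately have "cone p \<inter> cone p' = {}" using assms(1) unfolding prefix_free_def by blast
    then show False using assms(5,6) by blast
  qed
  then have "i = j" using i j assms(1) unfolding prefix_free_def by (metis nth_eq_iff_index_eq)
  then show ?thesis using i j \<open>p = p'\<close> by simp
qed

lemma prefix_map_rigid:
  assumes "prefix_free P" "length P = length Q" "(p,q) \<in> set (zip P Q)"
  shows "prefix_map P Q (cat p y) = cat q y"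
proof -
  have ex: "\<exists>pq. pq \<in> set (zip P Q) \<and> cat p y \<in> cone (fst pq)"
    using assms(3) cat_in_cone by fastforce
  define pq where "pq = (SOME pq. pq \<in> set (zip P Q) \<and> cat p y \<in> cone (fst pq))"
  have pq: "pq \<in> set (zip P Q) \<and> cat p y \<in> cone (fst pq)" unfolding pq_def
    by (rule someI_ex[OF ex])
  have "fst pq = p \<and> snd pq = q"
    using prefix_free_unique[OF assms(1,2), of "fst pq" "snd pq" p q "cat p y"] pq assms(3) by simp
  moreover have "prefix_map P Q (cat p y) = cat (snd pq) (sdrop (length (fst pq)) (cat p y))"
    unfolding prefix_map_def pq_def using ex by (simp add: Let_def Bex_def)
  ultimately show ?thesis by simp
qed

lemma prefix_map_rigid_nth:
  assumes "prefix_free P" "length P = length Q" "i < length P"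
  shows "prefix_map P Q (cat (P ! i) y) = cat (Q ! i) y"
  using assms by (intro prefix_map_rigid) (auto simp: in_set_zip)

lemma prefix_map_out:
  assumes "x \<notin> cover P"
  shows "prefix_map P Q x = x"
proof -
  have "\<not> (\<exists>pq\<in>set (zip P Q). x \<in> cone (fst pq))"
    using assms by (auto simp: cover_def dest: set_zip_leftD)
  then show ?thesis by (simp add: prefix_map_def)
qed

lemma cover_zip:
  assumes "length P = length Q" "x \<in> cover P"
  shows "\<exists>p q. (p,q) \<in> set (zip P Q) \<and> x \<in> cone p"
proof -
  obtain p where "p \<in> set P" "x \<in> cone p" using assms by (auto simp: cover_def)
  then obtain i where "i < length P" "P ! i = p" by (auto simp: in_set_conv_nth)
  then show ?thesis using assms \<open>x \<in> cone p\<close> by (intro exI[of _ p] exI[of _ "Q ! i"]) (auto simp: in_set_zip)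
qed

lemma prefix_map_unique:
  assumes "prefix_free P" "length P = length Q"
    "\<And>p q. (p,q) \<in> set (zip P Q) \<Longrightarrow> maps_rigidly f p q"
    "\<And>x. x \<notin> cover P \<Longrightarrow> f x = x"
  shows "prefix_map P Q = f"
proof
  fix x
  show "prefix_map P Q x = f x"
  proof (cases "x \<in> cover P")
    case True
    then obtain p q where pq: "(p,q) \<in> set (zip P Q)" "x \<in> cone p" using cover_zip assms(2) by blast
    then have x: "x = cat p (sdrop (length p) x)" by (simp add: cat_sdrop)
    have "prefix_map P Q x = cat q (sdrop (length p) x)" by (subst x, rule prefix_map_rigid[OF assms(1,2) pq(1)])
    moreover have "f x = cat q (sdrop (length p) x)" using assms(3)[OF pq(1)] x
      unfolding maps_rigidly_def by metis
    ultimately show ?thesis by simp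
  next
    case False
    then show ?thesis using assms(4) prefix_map_out by simp
  qed
qed

lemma prefix_map_maps_rigidly:
  assumes "prefix_free P" "length P = length Q" "(p,q) \<in> set (zip P Q)"
  shows "maps_rigidly (prefix_map P Q) p q"
  using prefix_map_rigid[OF assms] by (simp add: maps_rigidly_def)

lemma maps_rigidly_append: "maps_rigidly f p q \<Longrightarrow> maps_rigidly f (p @ r) (q @ r)"
  by (simp add: maps_rigidly_def cat_append)

lemma prefix_map_set_eq: "set (zip P Q) = set (zip P' Q') \<Longrightarrow> prefix_map P Q = prefix_map P' Q'"
  unfolding prefix_map_def fun_eq_iff by simp

lemma zip_rotate1: "length P = length Q \<Longrightarrow> zip (rotate1 P) (rotate1 Q) = rotate1 (zip P Q)"
  by (cases P; cases Q) auto

lemma zip_rotate: "length P = length Q \<Longrightarrow> zip (rotate k P) (rotate k Q) = rotate k (zip P Q)"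
  by (induction k) (auto simp: zip_rotate1)

lemma prefix_map_rotate: "length P = length Q \<Longrightarrow> prefix_map (rotate k P) (rotate k Q) = prefix_map P Q"
  by (rule prefix_map_set_eq) (simp add: zip_rotate)

lemma prefix_free_prefixed: "prefix_free P \<Longrightarrow> prefix_free (prefixed w P)"
proof -
  assume a: "prefix_free P"
  have "distinct (prefixed w P)" using a by (auto simp: prefix_free_def prefixed_def distinct_map inj_on_def)
  moreover have "cone p \<inter> cone q = {}" if "p \<in> set (prefixed w P)" "q \<in> set (prefixed w P)" "p \<noteq> q" for p q
  proof -
    note H = that
    obtain p' q' where pq: "p = w @ p'" "q = w @ q'" "p' \<in> set P" "q' \<in> set P" "p' \<noteq> q'"
      using H by (auto simp: prefixed_def)
    then have d: "cone p' \<inter> cone q' = {}" using a by (auto simp: prefix_free_def)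
    show ?thesis
    proof (rule ccontr)
      assume "cone p \<inter> cone q \<noteq> {}"
      then obtain x where x: "x \<in> cone (w @ p')" "x \<in> cone (w @ q')" using pq by auto
      then have "x \<in> cone w" using cone_append_sub by blast
      then have "x = cat w (sdrop (length w) x)" by (simp add: cat_sdrop)
      then have "sdrop (length w) x \<in> cone p'" "sdrop (length w) x \<in> cone q'" using x
        by (metis cat_in_cone_append_iff)+
      then show False using d by blast
    qed
  qed
  ultimately show ?thesis by (auto simp: prefix_free_def)
qed

lemma prefix_free_append:
  assumes "prefix_free A" "prefix_free B" "cover A \<inter> cover B = {}"
  shows "prefix_free (A @ B)"
proof -
  have "set A \<inter> set B = {}"
  proof (rule ccontr)
    assume "set A \<inter> set B \<noteq> {}"
    then obtain p where "p \<in> set A" "p \<in> set B" by blast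
    then have "cat p zeros \<in> cover A \<inter> cover B" unfolding cover_def using cat_in_cone by blast
    then show False using assms(3) by blast
  qed
  then have "distinct (A @ B)" using assms by (auto simp: prefix_free_def)
  moreover have "cone p \<inter> cone q = {}" if "p \<in> set (A @ B)" "q \<in> set (A @ B)" "p \<noteq> q" for p q
  proof -
    have "cone p \<subseteq> cover A \<and> p \<in> set A \<or> cone p \<subseteq> cover B \<and> p \<in> set B" using that by (auto simp: cover_def)
    moreover have "cone q \<subseteq> cover A \<and> q \<in> set A \<or> cone q \<subseteq> cover B \<and> q \<in> set B" using that by (auto simp: cover_def)
    ultimately show ?thesis using assms that unfolding prefix_free_def by blast
  qed
  ultimately show ?thesis by (auto simp: prefix_free_def)
qed

lemma prefix_free_single [simp]: "prefix_free [p]"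
  by (simp add: prefix_free_def)

lemma prefix_map_prefixed_in:
  assumes "prefix_free P" "length P = length Q"
  shows "prefix_map (prefixed w P) (prefixed w Q) (cat w y) = cat w (prefix_map P Q y)"
proof (cases "y \<in> cover P")
  case True
  then obtain p q where pq: "(p,q) \<in> set (zip P Q)" "y \<in> cone p" using cover_zip assms(2) by blast
  then have y: "y = cat p (sdrop (length p) y)" by (simp add: cat_sdrop)
  have m: "(w @ p, w @ q) \<in> set (zip (prefixed w P) (prefixed w Q))" using pq(1) by (auto simp: zip_prefixed)
  have "prefix_map (prefixed w P) (prefixed w Q) (cat w y) = prefix_map (prefixed w P) (prefixed w Q) (cat (w @ p) (sdrop (length p) y))"
    by (subst y) (simp add: cat_append)
  also have "\<dots> = cat (w @ q) (sdrop (length p) y)"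
    using prefix_map_rigid[OF prefix_free_prefixed[OF assms(1)] _ m] assms(2) by simp
  also have "\<dots> = cat w (prefix_map P Q y)"
    using prefix_map_rigid[OF assms pq(1), of "sdrop (length p) y"] y by (simp add: cat_append)
  finally show ?thesis .
next
  case False
  then show ?thesis by (simp add: prefix_map_out)
qed

lemma prefix_map_prefixed_out:
  assumes "x \<notin> cone w"
  shows "prefix_map (prefixed w P) (prefixed w Q) x = x"
  using assms cover_prefixed_sub prefix_map_out by blast

lemma prefix_map_id:
  assumes "prefix_free P" shows "prefix_map P P = id"
  using assms by (intro prefix_map_unique) (auto simp: maps_rigidly_def in_set_zip)

lemma prefix_map_comp:
  assumes "prefix_free P" "prefix_free Q" "length P = length Q" "length Q = length R" "cover Q \<subseteq> cover P"
  shows "prefix_map Q R \<circ> prefix_map P Q = prefix_map P R"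
proof (rule sym, rule prefix_map_unique)
  show "prefix_free P" by fact
  show "length P = length R" using assms by simp
next
  fix p r assume "(p, r) \<in> set (zip P R)"
  then obtain i where i: "i < length P" "P ! i = p" "R ! i = r" using assms by (auto simp: in_set_zip)
  show "maps_rigidly (prefix_map Q R \<circ> prefix_map P Q) p r"
    unfolding maps_rigidly_def
  proof
    fix y
    have "prefix_map P Q (cat (P ! i) y) = cat (Q ! i) y" using prefix_map_rigid_nth[OF assms(1,3) i(1)] .
    moreover have "prefix_map Q R (cat (Q ! i) y) = cat (R ! i) y" using prefix_map_rigid_nth[OF assms(2,4)] i(1) assms(3) by simp
    ultimately show "(prefix_map Q R \<circ> prefix_map P Q) (cat p y) = cat r y" using i by simp
  qed
next
  fix x assume "x \<notin> cover P"
  then have "x \<notin> cover Q" using assms(5) by blast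
  then show "(prefix_map Q R \<circ> prefix_map P Q) x = x" using \<open>x \<notin> cover P\<close> by (simp add: prefix_map_out)
qed

lemma prefix_map_inv:
  assumes "prefix_free P" "prefix_free Q" "length P = length Q" "cover P = cover Q"
  shows "inv (prefix_map P Q) = prefix_map Q P"
proof (rule inv_unique_comp)
  have "prefix_map P Q \<circ> prefix_map Q P = prefix_map Q Q"
    by (rule prefix_map_comp[OF assms(2) assms(1) assms(3)[symmetric] assms(3)]) (use assms(4) in blast)
  then show "prefix_map P Q \<circ> prefix_map Q P = id" using prefix_map_id[OF assms(2)] by simp
  have "prefix_map Q P \<circ> prefix_map P Q = prefix_map P P"
    by (rule prefix_map_comp[OF assms(1) assms(2) assms(3) assms(3)[symmetric]]) (use assms(4) in blast)
  then show "prefix_map Q P \<circ> prefix_map P Q = id" using prefix_map_id[OF assms(1)] by simp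
qed

inductive complete_code :: "bool list list \<Rightarrow> bool" where
  leaf: "complete_code [[]]"
| node: "complete_code P \<Longrightarrow> complete_code Q \<Longrightarrow> complete_code (prefixed [False] P @ prefixed [True] Q)"

lemma cone_at: "x \<in> cone (w @ [b] @ p) \<Longrightarrow> x (length w) = b"
  unfolding cone_iff by (drule spec[of _ "length w"]) (simp add: nth_append)

lemma cone_False_True_disj: "cone (w @ [False] @ p) \<inter> cone (w @ [True] @ q) = {}"
  using cone_at[of _ w False p] cone_at[of _ w True q] by fastforce

lemma cover_prefixed_False_True_disj: "cover (prefixed [False] P) \<inter> cover (prefixed [True] Q) = {}"
  using cone_False_True_disj[of "[]"] by (auto simp: cover_def prefixed_def)

lemma code_cover: "complete_code P \<Longrightarrow> cover P = UNIV"
proof (induction rule: complete_code.induct)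
  case leaf then show ?case by (simp add: cover_def)
next
  case (node P Q)
  have "x \<in> cover (prefixed [False] P @ prefixed [True] Q)" for x
    using node by (cases "x 0") (auto simp: mem_cover_prefixed cone_iff)
  then show ?case by auto
qed

lemma code_prefix_free: "complete_code P \<Longrightarrow> prefix_free P"
proof (induction rule: complete_code.induct)
  case leaf then show ?case by simp
next
  case (node P Q)
  then show ?case using prefix_free_append prefix_free_prefixed cover_prefixed_False_True_disj by blast
qed

lemma code_nonempty: "complete_code P \<Longrightarrow> P \<noteq> []"
  by (induction rule: complete_code.induct) (auto simp: prefixed_def)

definition cone_less :: "bool list \<Rightarrow> bool list \<Rightarrow> bool" where
  "cone_less p q \<longleftrightarrow> (\<forall>x\<in>cone p. \<forall>y\<in>cone q. lex_less x y)"

lemma cone_less_prefixed: "cone_less p q \<Longrightarrow> cone_less (w @ p) (w @ q)"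
  unfolding cone_less_def
proof (intro ballI)
  fix x y assume s: "\<forall>x\<in>cone p. \<forall>y\<in>cone q. lex_less x y" and x: "x \<in> cone (w @ p)" and y: "y \<in> cone (w @ q)"
  have xe: "x = cat w (sdrop (length w) x)" using x cone_append_sub[of w p] cat_sdrop[of x w] by auto
  have ye: "y = cat w (sdrop (length w) y)" using y cone_append_sub[of w q] cat_sdrop[of y w] by auto
  have "sdrop (length w) x \<in> cone p" using x xe by (metis cat_in_cone_append_iff)
  moreover have "sdrop (length w) y \<in> cone q" using y ye by (metis cat_in_cone_append_iff)
  ultimately have "lex_less (sdrop (length w) x) (sdrop (length w) y)" using s by blast
  then show "lex_less x y" using xe ye by (metis lex_less_cat)
qed

lemma code_sorted: "complete_code P \<Longrightarrow> sorted_wrt cone_less P"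
proof (induction rule: complete_code.induct)
  case leaf then show ?case by simp
next
  case (node P Q)
  have "sorted_wrt cone_less (prefixed [False] P)" using node
    unfolding prefixed_def sorted_wrt_map by (metis (no_types, lifting) cone_less_prefixed sorted_wrt_mono_rel)
  moreover have "sorted_wrt cone_less (prefixed [True] Q)" using node
    unfolding prefixed_def sorted_wrt_map by (metis (no_types, lifting) cone_less_prefixed sorted_wrt_mono_rel)
  moreover have "cone_less p q" if "p \<in> set (prefixed [False] P)" "q \<in> set (prefixed [True] Q)" for p q
    using that lex_less_split[of _ "[]"] by (auto simp: prefixed_def cone_less_def)
  ultimately show ?case by (auto simp: sorted_wrt_append)
qed

lemma code_prefix_map_mono:
  assumes "complete_code P" "complete_code Q" "length P = length Q" "lex_less x y"
  shows "lex_less (prefix_map P Q x) (prefix_map P Q y)"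
proof -
  have pfP: "prefix_free P" using assms code_prefix_free by blast
  have cP: "z \<in> cover P" for z using code_cover[OF assms(1)] by simp
  obtain i where i: "i < length P" "x \<in> cone (P ! i)"
    using cP[of x] unfolding cover_def by (metis UN_E in_set_conv_nth)
  obtain j where j: "j < length P" "y \<in> cone (P ! j)"
    using cP[of y] unfolding cover_def by (metis UN_E in_set_conv_nth)
  have xe: "x = cat (P ! i) (sdrop (length (P ! i)) x)" using i by (simp add: cat_sdrop)
  have ye: "y = cat (P ! j) (sdrop (length (P ! j)) y)" using j by (simp add: cat_sdrop)
  have px: "prefix_map P Q x = cat (Q ! i) (sdrop (length (P ! i)) x)"
    by (subst xe, rule prefix_map_rigid_nth[OF pfP assms(3) i(1)])
  have py: "prefix_map P Q y = cat (Q ! j) (sdrop (length (P ! j)) y)"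
    by (subst ye, rule prefix_map_rigid_nth[OF pfP assms(3) j(1)])
  have sP: "sorted_wrt cone_less P" and sQ: "sorted_wrt cone_less Q" using assms code_sorted by auto
  consider "i = j" | "i < j" | "j < i" by linarith
  then show ?thesis
  proof cases
    case 1
    then show ?thesis using assms(4) xe ye px py by (metis lex_less_cat)
  next
    case 2
    then have "cone_less (Q ! i) (Q ! j)" using sQ j assms(3) by (simp add: sorted_wrt_iff_nth_less)
    then show ?thesis using px py by (simp add: cone_less_def)
  next
    case 3
    then have "cone_less (P ! j) (P ! i)" using sP i by (simp add: sorted_wrt_iff_nth_less)
    then have "lex_less y x" using i j by (simp add: cone_less_def)
    then show ?thesis using assms(4) lex_less_asym by blast
  qed
qed

definition maps_rigidly_list :: "(cantor \<Rightarrow> cantor) \<Rightarrow> bool list list \<Rightarrow> bool list list \<Rightarrow> bool" where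
  "maps_rigidly_list f P Q \<longleftrightarrow> (\<forall>(p,q)\<in>set (zip P Q). maps_rigidly f p q)"

lemma maps_rigidly_list_app:
  "length A = length C \<Longrightarrow> maps_rigidly_list f (A @ B) (C @ D) \<longleftrightarrow> maps_rigidly_list f A C \<and> maps_rigidly_list f B D"
  by (auto simp: maps_rigidly_list_def)

lemma maps_rigidly_list_prefixed:
  assumes "maps_rigidly f u v" shows "maps_rigidly_list f (prefixed u V) (prefixed v V)"
  unfolding maps_rigidly_list_def zip_prefixed using maps_rigidly_append[OF assms]
  by (auto simp: in_set_zip)

lemma maps_rigidly_list_prefix_map: "prefix_free P \<Longrightarrow> length P = length Q \<Longrightarrow> maps_rigidly_list (prefix_map P Q) P Q"
  unfolding maps_rigidly_list_def using prefix_map_maps_rigidly by blast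

lemma prefix_map_eqI:
  assumes "prefix_free P" "length P = length Q" "maps_rigidly_list f P Q" "\<And>x. x \<notin> cover P \<Longrightarrow> f x = x"
  shows "prefix_map P Q = f"
  using prefix_map_unique[OF assms(1,2) _ assms(4)] assms(3) unfolding maps_rigidly_list_def by blast

lemma cover_prefixed_code: "complete_code P \<Longrightarrow> cover (prefixed w P) = cone w"
  using mem_cover_prefixed code_cover by blast

lemma prefix_free_rotate [simp]: "prefix_free (rotate k X) = prefix_free X"
  by (simp add: prefix_free_def)

lemma prefix_free_rotate1 [simp]: "prefix_free (rotate1 X) = prefix_free X"
  by (simp add: prefix_free_def)

lemma cover_rotate1 [simp]: "cover (rotate1 X) = cover X"
  by (simp add: cover_def)

lemma cover_rotate [simp]: "cover (rotate k X) = cover X"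
  by (simp add: cover_def)

lemma prefix_free_code_prefixed: "complete_code P \<Longrightarrow> prefix_free (prefixed w P)"
  using prefix_free_prefixed code_prefix_free by blast

lemma cone_False_notin_True: "x \<in> cone (w @ [False]) \<Longrightarrow> x \<notin> cone (w @ [True])"
  using cone_False_True_disj[of w "[]" "[]"] by auto

lemma prefix_map_prefixed_comp:
  assumes "complete_code P" "complete_code Q" "length P = length Q" "length Q = length R"
  shows "prefix_map (prefixed w Q) (prefixed w R) \<circ> prefix_map (prefixed w P) (prefixed w Q)
       = prefix_map (prefixed w P) (prefixed w R)"
  using assms by (intro prefix_map_comp) (simp_all add: prefix_free_code_prefixed cover_prefixed_code)

lemma maps_rigidly_list_comp_fixing:
  assumes "maps_rigidly_list f P Q" "\<And>x. x \<in> cover P \<Longrightarrow> g x = x"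
  shows "maps_rigidly_list (f \<circ> g) P Q"
  unfolding maps_rigidly_list_def
proof safe
  fix p q assume pq: "(p, q) \<in> set (zip P Q)"
  then have "g (cat p y) = cat p y" for y
    using assms(2) set_zip_leftD[OF pq] cat_in_cone unfolding cover_def by blast
  moreover have "maps_rigidly f p q" using assms(1) pq by (auto simp: maps_rigidly_list_def)
  ultimately show "maps_rigidly (f \<circ> g) p q" by (simp add: maps_rigidly_def)
qed

lemma maps_rigidly_list_fixing_comp:
  assumes "maps_rigidly_list f P Q" "\<And>x. x \<in> cover Q \<Longrightarrow> g x = x"
  shows "maps_rigidly_list (g \<circ> f) P Q"
  unfolding maps_rigidly_list_def
proof safe
  fix p q assume pq: "(p, q) \<in> set (zip P Q)"
  then have "g (cat q y) = cat q y" for y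
    using assms(2) set_zip_rightD[OF pq] cat_in_cone unfolding cover_def by blast
  moreover have "maps_rigidly f p q" using assms(1) pq by (auto simp: maps_rigidly_list_def)
  ultimately show "maps_rigidly (g \<circ> f) p q" by (simp add: maps_rigidly_def)
qed

lemma prefix_free_node:
  "prefix_free P \<Longrightarrow> prefix_free Q \<Longrightarrow> prefix_free (prefixed [False] P @ prefixed [True] Q)"
  using prefix_free_append prefix_free_prefixed cover_prefixed_False_True_disj by blast

text \<open>The two factors have disjoint supports.\<close>

lemma prefix_map_node:
  assumes "prefix_free P" "prefix_free Q" "length P = length P'" "length Q = length Q'"
  shows "prefix_map (prefixed w (prefixed [False] P @ prefixed [True] Q))
                    (prefixed w (prefixed [False] P' @ prefixed [True] Q'))
       = prefix_map (prefixed (w @ [False]) P) (prefixed (w @ [False]) P')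
         \<circ> prefix_map (prefixed (w @ [True]) Q) (prefixed (w @ [True]) Q')"
    (is "_ = ?h0 \<circ> ?h1")
proof (rule prefix_map_eqI)
  have fix0: "?h0 x = x" if "x \<in> cover (prefixed (w @ [True]) Q')" for x
    using that cover_prefixed_sub cone_False_notin_True by (blast intro: prefix_map_prefixed_out)
  have fix1: "?h1 x = x" if "x \<in> cover (prefixed (w @ [False]) P)" for x
    using that cover_prefixed_sub cone_False_notin_True by (blast intro: prefix_map_prefixed_out)
  have "maps_rigidly_list (?h0 \<circ> ?h1) (prefixed (w @ [False]) P) (prefixed (w @ [False]) P')"
    using assms(1,3) fix1 by (intro maps_rigidly_list_comp_fixing maps_rigidly_list_prefix_map prefix_free_prefixed) auto
  moreover have "maps_rigidly_list (?h0 \<circ> ?h1) (prefixed (w @ [True]) Q) (prefixed (w @ [True]) Q')"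
    using assms(2,4) fix0 by (intro maps_rigidly_list_fixing_comp maps_rigidly_list_prefix_map prefix_free_prefixed) auto
  ultimately show "maps_rigidly_list (?h0 \<circ> ?h1) (prefixed w (prefixed [False] P @ prefixed [True] Q))
      (prefixed w (prefixed [False] P' @ prefixed [True] Q'))"
    using assms(3) by (simp add: maps_rigidly_list_app)
  show "prefix_free (prefixed w (prefixed [False] P @ prefixed [True] Q))"
    using assms(1,2) by (intro prefix_free_prefixed prefix_free_node)
  show "(?h0 \<circ> ?h1) x = x" if "x \<notin> cover (prefixed w (prefixed [False] P @ prefixed [True] Q))" for x
    using that by (simp add: mem_cover_prefixed prefix_map_out)
qed (use assms in simp)

section \<open>Closure properties of \<open>T\<close>\<close>

lemma topspace_cantor [simp]: "topspace cantor_top = UNIV"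
  by (simp add: cantor_top_def PiE_UNIV_domain)

lemma open_coord: "openin cantor_top {x. x i = b}"
proof -
  have "continuous_map cantor_top (discrete_topology (UNIV::bool set)) (\<lambda>x. x i)"
    unfolding cantor_top_def by (rule continuous_map_product_projection) simp
  then have "openin cantor_top {x \<in> topspace cantor_top. x i \<in> {b}}"
    by (rule openin_continuous_map_preimage) simp
  then show ?thesis by simp
qed

lemma open_cone: "openin cantor_top (cone w)"
proof -
  have "cone w = (\<Inter>i\<in>{..<length w}. {x. x i = w ! i}) \<inter> topspace cantor_top"
    by (auto simp: cone_iff)
  also have "openin cantor_top \<dots>"
    by (rule openin_INT) (auto simp: open_coord)
  finally show ?thesis .
qed

lemma compact_cantor: "compact_space cantor_top"
  unfolding cantor_top_def compact_space_product_topology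
  by (simp add: compact_space_discrete_topology)

definition locally_rigid :: "(cantor \<Rightarrow> cantor) \<Rightarrow> bool" where
  "locally_rigid f \<longleftrightarrow> (\<forall>x. \<exists>w1 w2. x \<in> cone w1 \<and> maps_rigidly f w1 w2)"

definition stake :: "nat \<Rightarrow> cantor \<Rightarrow> bool list" where
  "stake k y = map y [0..<k]"

lemma length_stake [simp]: "length (stake k y) = k" by (simp add: stake_def)

lemma in_cone_stake [simp]: "y \<in> cone (stake k y)"
  by (simp add: cone_iff stake_def)

lemma locally_rigid_continuous_map:
  assumes "locally_rigid f"
  shows "continuous_map cantor_top cantor_top f"
  unfolding cantor_top_def continuous_map_componentwise_UNIV
proof
  fix k
  show "continuous_map (product_topology (\<lambda>_. discrete_topology UNIV) UNIV)
          (discrete_topology UNIV) (\<lambda>x. f x k)"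
    unfolding continuous_map_openin_preimage_eq cantor_top_def[symmetric]
  proof (intro conjI allI impI)
    fix U :: "bool set"
    show "openin cantor_top (topspace cantor_top \<inter> (\<lambda>x. f x k) -` U)"
    proof (subst openin_subopen, intro ballI)
      fix x assume x: "x \<in> topspace cantor_top \<inter> (\<lambda>x. f x k) -` U"
      obtain w1 w2 where w: "x \<in> cone w1" "maps_rigidly f w1 w2" using assms unfolding locally_rigid_def by meson
      define y where "y = sdrop (length w1) x"
      have xe: "x = cat w1 y" using w(1) by (simp add: y_def cat_sdrop)
      define c where "c = w1 @ stake (k+1) y"
      have "x \<in> cone c" unfolding c_def xe by simp
      moreover have "cone c \<subseteq> topspace cantor_top \<inter> (\<lambda>x. f x k) -` U"
      proof
        fix z assume z: "z \<in> cone c"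
        then have "z \<in> cone w1" unfolding c_def using cone_append_sub by blast
        then have ze: "z = cat w1 (sdrop (length w1) z)" by (simp add: cat_sdrop)
        have zz: "sdrop (length w1) z \<in> cone (stake (k+1) y)" using z ze unfolding c_def by (metis cat_in_cone_append_iff)
        then have agree: "\<forall>i<k+1. sdrop (length w1) z i = y i" by (auto simp: cone_iff stake_def simp del: upt_Suc)
        have fz: "f z = cat w2 (sdrop (length w1) z)" using w(2) ze by (metis maps_rigidly_def)
        have fx: "f x = cat w2 y" using w(2) xe by (simp add: maps_rigidly_def)
        have "f z k = f x k" unfolding fz fx cat_def using agree by auto
        then show "z \<in> topspace cantor_top \<inter> (\<lambda>x. f x k) -` U" using x by auto
      qed
      ultimately show "\<exists>T. openin cantor_top T \<and> x \<in> T \<and> T \<subseteq> topspace cantor_top \<inter> (\<lambda>x. f x k) -` U"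
        using open_cone by blast
    qed
  qed auto
qed

lemma ThompsonT_intro:
  assumes "locally_rigid f" "locally_rigid g" "\<And>x. g (f x) = x" "\<And>y. f (g y) = y" "cyc_preserving f"
  shows "f \<in> ThompsonT"
proof -
  have "homeomorphic_maps cantor_top cantor_top f g"
    unfolding homeomorphic_maps_def using assms locally_rigid_continuous_map by auto
  then have "homeomorphic_map cantor_top cantor_top f" by (rule homeomorphic_maps_imp_map)
  then show ?thesis using assms unfolding ThompsonT_def ThompsonV_def locally_rigid_def cyc_preserving_def by auto
qed

lemma ThompsonT_bij: "f \<in> ThompsonT \<Longrightarrow> bij f"
  unfolding ThompsonT_def ThompsonV_def bij_def
  using homeomorphic_imp_surjective_map homeomorphic_imp_injective_map by fastforce

lemma ThompsonT_locally_rigid: "f \<in> ThompsonT \<Longrightarrow> locally_rigid f"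
  unfolding ThompsonT_def ThompsonV_def locally_rigid_def by auto

lemma ThompsonT_cyc_preserving: "f \<in> ThompsonT \<Longrightarrow> cyc_preserving f"
  unfolding ThompsonT_def cyc_preserving_def by auto

lemma locally_rigid_inv:
  assumes "locally_rigid f" "bij f"
  shows "locally_rigid (inv f)"
  unfolding locally_rigid_def
proof
  fix y
  obtain w1 w2 where w: "inv f y \<in> cone w1" "maps_rigidly f w1 w2" using assms(1) unfolding locally_rigid_def by meson
  have "y = f (inv f y)" using assms(2) by (simp add: bij_is_surj surj_f_inv_f)
  also have "\<dots> = cat w2 (sdrop (length w1) (inv f y))" using w by (metis cat_sdrop maps_rigidly_def)
  finally have ye: "y = cat w2 (sdrop (length w1) (inv f y))" .
  have "y \<in> cone w2" by (subst ye) simp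
  moreover have "maps_rigidly (inv f) w2 w1"
    unfolding maps_rigidly_def using w(2) assms(2)
    by (metis bij_is_inj inv_f_f maps_rigidly_def)
  ultimately show "\<exists>w1 w2. y \<in> cone w1 \<and> maps_rigidly (inv f) w1 w2" by blast
qed

lemma locally_rigid_comp:
  assumes "locally_rigid f" "locally_rigid g"
  shows "locally_rigid (f \<circ> g)"
  unfolding locally_rigid_def
proof
  fix x
  obtain w1 w2 where w: "x \<in> cone w1" "maps_rigidly g w1 w2" using assms(2) unfolding locally_rigid_def by meson
  obtain w3 w4 where w': "g x \<in> cone w3" "maps_rigidly f w3 w4" using assms(1) unfolding locally_rigid_def by meson
  define y where "y = sdrop (length w1) x"
  have xe: "x = cat w1 y" using w(1) by (simp add: y_def cat_sdrop)
  define c where "c = stake (length w3) y"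
  have gx: "g x = cat w2 y" using w(2) xe by (simp add: maps_rigidly_def)
  have "g x \<in> cone (w2 @ c)" unfolding gx c_def by simp
  moreover have "length w3 \<le> length (w2 @ c)" by (simp add: c_def)
  ultimately have pfx: "w3 = take (length w3) (w2 @ c)"
    using cones_meet_prefix[OF w'(1)] by blast
  define r where "r = drop (length w3) (w2 @ c)"
  have split: "w2 @ c = w3 @ r" unfolding r_def using pfx by (metis append_take_drop_id)
  have "maps_rigidly (f \<circ> g) (w1 @ c) (w4 @ r)"
    unfolding maps_rigidly_def
  proof
    fix z
    have "g (cat (w1 @ c) z) = cat (w2 @ c) z" using w(2) by (simp add: maps_rigidly_def cat_append)
    also have "\<dots> = cat (w3 @ r) z" by (simp add: split)
    finally show "(f \<circ> g) (cat (w1 @ c) z) = cat (w4 @ r) z"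
      using w'(2) by (simp add: maps_rigidly_def cat_append)
  qed
  moreover have "x \<in> cone (w1 @ c)" unfolding xe c_def by simp
  ultimately show "\<exists>w1 w2. x \<in> cone w1 \<and> maps_rigidly (f \<circ> g) w1 w2" by blast
qed

lemma cyc_preserving_inv:
  assumes "cyc_preserving f" "bij f"
  shows "cyc_preserving (inv f)"
  unfolding cyc_preserving_def
proof (intro allI impI)
  fix a b c assume "cyc a b c"
  then have "cyc (f (inv f a)) (f (inv f b)) (f (inv f c))"
    using assms(2) by (simp add: bij_is_surj surj_f_inv_f)
  then show "cyc (inv f a) (inv f b) (inv f c)"
    using cyc_preserving_iff[OF bij_is_inj[OF assms(2)] assms(1)] by blast
qed

lemma ThompsonT_comp:
  assumes "f \<in> ThompsonT" "g \<in> ThompsonT"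
  shows "f \<circ> g \<in> ThompsonT"
proof (rule ThompsonT_intro)
  have b: "bij f" "bij g" using assms ThompsonT_bij by auto
  show "locally_rigid (f \<circ> g)" using locally_rigid_comp assms ThompsonT_locally_rigid by blast
  show "locally_rigid (inv g \<circ> inv f)" using locally_rigid_comp locally_rigid_inv assms ThompsonT_locally_rigid b by blast
  show "(inv g \<circ> inv f) ((f \<circ> g) x) = x" for x using b by (simp add: bij_is_inj)
  show "(f \<circ> g) ((inv g \<circ> inv f) y) = y" for y using b by (simp add: bij_is_surj surj_f_inv_f)
  show "cyc_preserving (f \<circ> g)" using assms ThompsonT_cyc_preserving unfolding cyc_preserving_def by auto
qed

lemma ThompsonT_inv:
  assumes "f \<in> ThompsonT"
  shows "inv f \<in> ThompsonT"
proof (rule ThompsonT_intro)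
  have b: "bij f" using assms ThompsonT_bij by auto
  show "locally_rigid (inv f)" using locally_rigid_inv assms ThompsonT_locally_rigid b by blast
  show "locally_rigid f" using assms ThompsonT_locally_rigid by blast
  show "f (inv f x) = x" for x using b by (simp add: bij_is_surj surj_f_inv_f)
  show "inv f (f y) = y" for y using b by (simp add: bij_is_inj)
  show "cyc_preserving (inv f)" using cyc_preserving_inv assms ThompsonT_cyc_preserving b by blast
qed

lemma ThompsonT_id: "id \<in> ThompsonT"
proof (rule ThompsonT_intro)
  show "locally_rigid id" unfolding locally_rigid_def maps_rigidly_def by (auto intro: exI[of _ "[]"])
  then show "locally_rigid id" .
qed (auto simp: cyc_preserving_def)

lemma code_locally_rigid:
  assumes "complete_code P" "length P = length Q"
  shows "locally_rigid (prefix_map P Q)"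
  unfolding locally_rigid_def
proof
  fix x
  have "x \<in> cover P" using code_cover[OF assms(1)] by simp
  then obtain p q where "(p,q) \<in> set (zip P Q)" "x \<in> cone p" using cover_zip assms(2) by blast
  then show "\<exists>w1 w2. x \<in> cone w1 \<and> maps_rigidly (prefix_map P Q) w1 w2"
    using prefix_map_maps_rigidly[OF code_prefix_free[OF assms(1)] assms(2)] by blast
qed

lemma prefix_map_code_inverse:
  assumes "complete_code P" "complete_code Q" "length P = length Q"
  shows "prefix_map Q P (prefix_map P Q x) = x"
proof -
  have "prefix_map Q P \<circ> prefix_map P Q = prefix_map P P"
    by (rule prefix_map_comp) (use assms code_prefix_free code_cover in auto)
  then show ?thesis using prefix_map_id[OF code_prefix_free[OF assms(1)]] by (metis comp_apply id_apply)
qed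

lemma code_prefix_map_T:
  assumes "complete_code P" "complete_code Q" "length P = length Q" "cyc_preserving (prefix_map P Q)"
  shows "prefix_map P Q \<in> ThompsonT"
  by (rule ThompsonT_intro[where g="prefix_map Q P"])
     (use assms code_locally_rigid prefix_map_code_inverse in auto)

lemma code_prefix_map_T_mono:
  assumes "complete_code P" "complete_code Q" "length P = length Q"
  shows "prefix_map P Q \<in> ThompsonT"
  using code_prefix_map_T[OF assms] mono_cyc_preserving code_prefix_map_mono[OF assms] by blast

lemma generated_subset_ThompsonT:
  assumes "S \<subseteq> ThompsonT"
  shows "generated S \<subseteq> ThompsonT"
proof
  fix f assume "f \<in> generated S"
  then obtain ws where ws: "ws \<in> words_over S" "f = eval_word ws" by (auto simp: generated_def)
  have "eval_word ws \<in> ThompsonT" using ws(1)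
  proof (induction ws)
    case Nil then show ?case by (metis eval_word_Nil ThompsonT_id)
  next
    case (Cons a ws)
    then have "a \<in> ThompsonT" using assms ThompsonT_inv by (auto simp: words_over_def)
    moreover have "eval_word ws \<in> ThompsonT" using Cons by (auto simp: words_over_def)
    ultimately show ?case by (metis ThompsonT_comp eval_word_Cons)
  qed
  then show "f \<in> ThompsonT" using ws by simp
qed

section \<open>Finite generation of \<open>T\<close>\<close>

definition x0_dom :: "bool list list" where "x0_dom = [[False],[True,False],[True,True]]"
definition x0_cod :: "bool list list" where "x0_cod = [[False,False],[False,True],[True]]"

definition x0_at :: "bool list \<Rightarrow> cantor \<Rightarrow> cantor" where
  "x0_at w = prefix_map (prefixed w x0_dom) (prefixed w x0_cod)"

definition x0 :: "cantor \<Rightarrow> cantor" where "x0 = x0_at []"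
definition x1 :: "cantor \<Rightarrow> cantor" where "x1 = x0_at [True]"
definition c0 :: "cantor \<Rightarrow> cantor" where "c0 = prefix_map [[False],[True]] [[True],[False]]"

definition T_gens :: "(cantor \<Rightarrow> cantor) set" where "T_gens = {x0, x1, c0}"

lemma code_x0_dom: "complete_code x0_dom"
proof -
  have "complete_code (prefixed [False] [[]] @ prefixed [True] (prefixed [False] [[]] @ prefixed [True] [[]]))"
    by (intro complete_code.node complete_code.leaf)
  then show ?thesis by (simp add: x0_dom_def)
qed

lemma code_x0_cod: "complete_code x0_cod"
proof -
  have "complete_code (prefixed [False] (prefixed [False] [[]] @ prefixed [True] [[]]) @ prefixed [True] [[]])"
    by (intro complete_code.node complete_code.leaf)
  then show ?thesis by (simp add: x0_cod_def)
qed

lemma code_halves: "complete_code [[False],[True]]"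
proof -
  have "complete_code (prefixed [False] [[]] @ prefixed [True] [[]])" by (intro complete_code.node complete_code.leaf)
  then show ?thesis by simp
qed

lemma prefix_free_x0_dom: "prefix_free x0_dom" and prefix_free_x0_cod: "prefix_free x0_cod"
  using code_x0_dom code_x0_cod code_prefix_free by auto

lemma length_x0_dom_cod [simp]: "length x0_dom = 3" "length x0_cod = 3"
  by (simp_all add: x0_dom_def x0_cod_def)

lemma x0_T: "x0 \<in> ThompsonT"
  unfolding x0_def x0_at_def using code_prefix_map_T_mono[OF code_x0_dom code_x0_cod] by simp

lemma x1_eq: "x1 = prefix_map ([False] # prefixed [True] x0_dom) ([False] # prefixed [True] x0_cod)"
proof (rule sym, rule prefix_map_unique)
  show "prefix_free ([False] # prefixed [True] x0_dom)"
    using code_prefix_free[OF complete_code.node[OF complete_code.leaf code_x0_dom]] by simp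
  show "length ([False] # prefixed [True] x0_dom) = length ([False] # prefixed [True] x0_cod)" by simp
next
  fix p q assume "(p, q) \<in> set (zip ([False] # prefixed [True] x0_dom) ([False] # prefixed [True] x0_cod))"
  then have "(p,q) = ([False],[False]) \<or> (p,q) \<in> set (zip (prefixed [True] x0_dom) (prefixed [True] x0_cod))" by auto
  then show "maps_rigidly x1 p q"
  proof
    assume "(p,q) = ([False],[False])"
    then show ?thesis unfolding x1_def x0_at_def maps_rigidly_def
      by (auto intro!: prefix_map_prefixed_out simp: cone_iff cat_def)
  next
    assume "(p,q) \<in> set (zip (prefixed [True] x0_dom) (prefixed [True] x0_cod))"
    then show ?thesis unfolding x1_def x0_at_def
      by (intro prefix_map_maps_rigidly prefix_free_prefixed prefix_free_x0_dom) auto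
  qed
next
  fix x assume "x \<notin> cover ([False] # prefixed [True] x0_dom)"
  then have "x \<notin> cone [True]" using code_cover[OF code_x0_dom] by (auto simp: mem_cover_prefixed)
  then show "x1 x = x" unfolding x1_def x0_at_def by (rule prefix_map_prefixed_out)
qed

lemma x1_T: "x1 \<in> ThompsonT"
proof -
  have c1: "complete_code ([False] # prefixed [True] x0_dom)" using complete_code.node[OF complete_code.leaf code_x0_dom] by simp
  have c2: "complete_code ([False] # prefixed [True] x0_cod)" using complete_code.node[OF complete_code.leaf code_x0_cod] by simp
  show ?thesis unfolding x1_eq using code_prefix_map_T_mono[OF c1 c2] by simp
qed

definition flip :: "cantor \<Rightarrow> cantor" where "flip x = x(0 := \<not> x 0)"

lemma c0_flip: "c0 x = flip x"
proof -
  have x: "x = cat [x 0] (sdrop 1 x)" using cat_sdrop[of x "[x 0]"] by (simp add: cone_iff)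
  have pf2: "prefix_free [[False],[True]]" using code_prefix_free[OF code_halves] .
  have "c0 (cat [x 0] (sdrop 1 x)) = cat [\<not> x 0] (sdrop 1 x)"
    unfolding c0_def by (cases "x 0") (auto intro!: prefix_map_rigid[OF pf2])
  moreover have "flip x = cat [\<not> x 0] (sdrop 1 x)"
    by (auto simp: flip_def cat_def sdrop_def fun_eq_iff)
  ultimately show ?thesis using x by metis
qed

lemma lex_less_head:
  "lex_less x y \<longleftrightarrow> (\<not> x 0 \<and> y 0) \<or> (x 0 = y 0 \<and> lex_less (sdrop 1 x) (sdrop 1 y))"
proof -
  have x: "x = cat [x 0] (sdrop 1 x)" using cat_sdrop[of x "[x 0]"] by (simp add: cone_iff)
  have y: "y = cat [y 0] (sdrop 1 y)" using cat_sdrop[of y "[y 0]"] by (simp add: cone_iff)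
  show ?thesis
  proof (cases "x 0 = y 0")
    case True
    have xe: "x = cat [y 0] (sdrop 1 x)" by (subst True[symmetric]) (rule x)
    have "lex_less x y = lex_less (cat [y 0] (sdrop 1 x)) (cat [y 0] (sdrop 1 y))"
      by (rule arg_cong2[where f=lex_less, OF xe y])
    then show ?thesis using True by simp
  next
    case False
    show ?thesis
    proof (cases "x 0")
      case True
      then have "lex_less y x" using False lex_less_split'[of y "[]" x] by (simp add: cone_iff)
      then show ?thesis using True False lex_less_asym by blast
    next
      case F: False
      then have "lex_less x y" using False lex_less_split'[of x "[]" y] by (simp add: cone_iff)
      then show ?thesis using F False by blast
    qed
  qed
qed

lemma flip_simps [simp]: "flip x 0 = (\<not> x 0)" "sdrop 1 (flip x) = sdrop 1 x"
  by (auto simp: flip_def sdrop_def fun_eq_iff)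

lemma c0_cyc: "cyc_preserving c0"
  unfolding cyc_preserving_def c0_flip
proof (intro allI impI)
  fix a b c
  have h: "\<And>x y. lex_less (flip x) (flip y) \<longleftrightarrow> (x 0 \<and> \<not> y 0) \<or> (x 0 = y 0 \<and> lex_less (sdrop 1 x) (sdrop 1 y))"
    by (subst lex_less_head) (simp only: flip_simps, auto)
  note ab = lex_less_head[of a b] and bc = lex_less_head[of b c] and ca = lex_less_head[of c a]
  assume "cyc a b c"
  then show "cyc (flip a) (flip b) (flip c)"
    unfolding cyc_def h ab bc ca by blast
qed

lemma flip_flip [simp]: "flip (flip x) = x"
  by (auto simp: flip_def)

lemma c0_rigid: "maps_rigidly c0 [b] [\<not> b]"
  unfolding maps_rigidly_def c0_flip by (auto simp: flip_def cat_def fun_eq_iff)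

lemma c0_T: "c0 \<in> ThompsonT"
proof (rule ThompsonT_intro[where g=c0])
  show "locally_rigid c0" unfolding locally_rigid_def
  proof
    fix x show "\<exists>w1 w2. x \<in> cone w1 \<and> maps_rigidly c0 w1 w2"
      using c0_rigid[of "x 0"] by (intro exI[of _ "[x 0]"] exI[of _ "[\<not> x 0]"]) (auto simp: cone_iff)
  qed
  then show "locally_rigid c0" .
  show "c0 (c0 x) = x" for x by (simp add: c0_flip)
  show "c0 (c0 x) = x" for x by (simp add: c0_flip)
  show "cyc_preserving c0" by (rule c0_cyc)
qed

lemma T_gens_subset_ThompsonT: "T_gens \<subseteq> ThompsonT"
  using x0_T x1_T c0_T by (auto simp: T_gens_def)

lemma T_gens_bij: "s \<in> T_gens \<Longrightarrow> bij s"
  using T_gens_subset_ThompsonT ThompsonT_bij by blast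

definition T_span where "T_span = generated T_gens"

lemma T_span_subset_ThompsonT: "T_span \<subseteq> ThompsonT"
  unfolding T_span_def using generated_subset_ThompsonT[OF T_gens_subset_ThompsonT] .

lemma T_span_comp: "f \<in> T_span \<Longrightarrow> g \<in> T_span \<Longrightarrow> f \<circ> g \<in> T_span"
  unfolding T_span_def by (rule generated_comp)

lemma T_span_inv: "f \<in> T_span \<Longrightarrow> inv f \<in> T_span"
  unfolding T_span_def using generated_inv T_gens_bij by blast

lemma T_span_id: "id \<in> T_span"
  unfolding T_span_def by (rule generated_id)

lemma T_span_gens: "x0 \<in> T_span" "x1 \<in> T_span" "c0 \<in> T_span"
  unfolding T_span_def T_gens_def by (auto intro: generated_gen)

lemma T_span_bij: "f \<in> T_span \<Longrightarrow> bij f"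
  using T_span_subset_ThompsonT ThompsonT_bij by blast

lemma maps_rigidly_inv:
  assumes "bij g" "maps_rigidly g a b"
  shows "maps_rigidly (inv g) b a"
  using assms unfolding maps_rigidly_def by (metis bij_is_inj inv_f_f)

lemma conj_prefix_map_prefixed:
  assumes "bij g" "maps_rigidly g a b" "prefix_free P" "length P = length Q"
  shows "g \<circ> prefix_map (prefixed a P) (prefixed a Q) \<circ> inv g = prefix_map (prefixed b P) (prefixed b Q)"
proof
  fix x
  show "(g \<circ> prefix_map (prefixed a P) (prefixed a Q) \<circ> inv g) x = prefix_map (prefixed b P) (prefixed b Q) x"
  proof (cases "x \<in> cone b")
    case True
    then have xe: "x = cat b (sdrop (length b) x)" by (simp add: cat_sdrop)
    have ig: "inv g (cat b y) = cat a y" for y using maps_rigidly_inv[OF assms(1,2)] by (simp add: maps_rigidly_def)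
    have "(g \<circ> prefix_map (prefixed a P) (prefixed a Q) \<circ> inv g) (cat b (sdrop (length b) x)) = cat b (prefix_map P Q (sdrop (length b) x))"
      using ig prefix_map_prefixed_in[OF assms(3,4)] assms(2) by (simp add: maps_rigidly_def)
    also have "\<dots> = prefix_map (prefixed b P) (prefixed b Q) (cat b (sdrop (length b) x))"
      using prefix_map_prefixed_in[OF assms(3,4)] by simp
    finally show ?thesis using xe by metis
  next
    case False
    have "inv g x \<notin> cone a"
    proof
      assume "inv g x \<in> cone a"
      then have "inv g x = cat a (sdrop (length a) (inv g x))" by (simp add: cat_sdrop)
      then have "g (inv g x) = cat b (sdrop (length a) (inv g x))" using assms(2) by (metis maps_rigidly_def)
      then have "x \<in> cone b" using assms(1) by (metis bij_inv_eq_iff cat_in_cone)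
      then show False using False by simp
    qed
    then have "prefix_map (prefixed a P) (prefixed a Q) (inv g x) = inv g x" by (rule prefix_map_prefixed_out)
    then show ?thesis using False prefix_map_prefixed_out[OF False] assms(1)
      by (simp add: bij_is_surj surj_f_inv_f)
  qed
qed

lemma x0_at_conj_T_span:
  assumes "g \<in> T_span" "maps_rigidly g a b" "x0_at (a @ z) \<in> T_span"
  shows "x0_at (b @ z) \<in> T_span"
proof -
  have "g \<circ> x0_at (a @ z) \<circ> inv g = x0_at (b @ z)"
    unfolding x0_at_def using conj_prefix_map_prefixed[OF T_span_bij[OF assms(1)] maps_rigidly_append[OF assms(2)] prefix_free_x0_dom] by simp
  moreover have "g \<circ> x0_at (a @ z) \<circ> inv g \<in> T_span"
    using assms T_span_comp T_span_inv by blast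
  ultimately show ?thesis by simp
qed

lemma x0_rigid: "maps_rigidly x0 [False] [False,False]" "maps_rigidly x0 [True,False] [False,True]"
   "maps_rigidly x0 [True,True] [True]"
  unfolding x0_def x0_at_def using prefix_map_maps_rigidly[OF prefix_free_x0_dom] by (auto simp: x0_dom_def x0_cod_def)

text \<open>Conjugating \<open>x0_at a\<close> by an element mapping the cone \<open>a\<close> rigidly onto the cone \<open>b\<close> gives
  \<open>x0_at b\<close>; starting from \<open>x1 = x0_at [True]\<close>, conjugation by \<open>c0\<close>, \<open>x0\<close> and \<open>inv x0\<close> reaches every address.\<close>

lemma x0_at_Cons_T_span: "x0_at (True # z) \<in> T_span \<and> x0_at (False # z) \<in> T_span"
proof (induction z)
  case Nil
  have "x0_at [True] \<in> T_span" using T_span_gens(2) by (simp add: x1_def)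
  moreover have "x0_at ([False] @ []) \<in> T_span"
    by (rule x0_at_conj_T_span[OF T_span_gens(3) c0_rigid[of True, simplified]]) (use \<open>x0_at [True] \<in> T_span\<close> in simp)
  ultimately show ?case by simp
next
  case (Cons b z)
  have ix0: "inv x0 \<in> T_span" using T_span_inv T_span_gens by blast
  have bx0: "bij x0" using T_span_bij T_span_gens by blast
  have TT: "x0_at (True # True # z) \<in> T_span"
    using x0_at_conj_T_span[OF ix0 maps_rigidly_inv[OF bx0 x0_rigid(3)], of z] Cons by simp
  have FF: "x0_at (False # False # z) \<in> T_span"
    using x0_at_conj_T_span[OF T_span_gens(1) x0_rigid(1), of z] Cons by simp
  have FT: "x0_at (False # True # z) \<in> T_span"
    using x0_at_conj_T_span[OF T_span_gens(3) c0_rigid[of True, simplified], of "True # z"] TT by simp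
  have TF: "x0_at (True # False # z) \<in> T_span"
    using x0_at_conj_T_span[OF ix0 maps_rigidly_inv[OF bx0 x0_rigid(2)], of z] FT by simp
  show ?case using TT FF FT TF by (cases b) auto
qed

lemma x0_at_T_span: "x0_at w \<in> T_span"
proof (cases w)
  case Nil then show ?thesis using T_span_gens(1) by (simp add: x0_def)
next
  case (Cons b z) then show ?thesis using x0_at_Cons_T_span by (cases b) auto
qed

lemma T_span_prefix_map_trans:
  assumes "complete_code P" "complete_code Q" "length P = length Q" "length Q = length R"
    and "prefix_map (prefixed w P) (prefixed w Q) \<in> T_span"
    and "prefix_map (prefixed w Q) (prefixed w R) \<in> T_span"
  shows "prefix_map (prefixed w P) (prefixed w R) \<in> T_span"
  using T_span_comp[OF assms(6,5)] prefix_map_prefixed_comp[OF assms(1-4)] by simp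

lemma inv_x0_at: "inv (x0_at w) = prefix_map (prefixed w x0_cod) (prefixed w x0_dom)"
  unfolding x0_at_def
  by (rule prefix_map_inv) (simp_all add: prefix_free_code_prefixed code_x0_dom code_x0_cod cover_prefixed_code)

lemma rotation_eq_inv_x0_at:
  assumes "complete_code A" "complete_code B" "complete_code C"
  shows "prefix_map (prefixed w (prefixed [False] (prefixed [False] A @ prefixed [True] B) @ prefixed [True] C))
                    (prefixed w (prefixed [False] A @ prefixed [True] (prefixed [False] B @ prefixed [True] C)))
       = inv (x0_at w)"
  unfolding inv_x0_at
proof (rule prefix_map_eqI)
  have r: "maps_rigidly (prefix_map (prefixed w x0_cod) (prefixed w x0_dom)) (w @ p) (w @ q)"
    if "(p, q) \<in> {([False, False], [False]), ([False, True], [True, False]), ([True], [True, True])}" for p q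
    using that by (intro prefix_map_maps_rigidly prefix_free_prefixed code_prefix_free code_x0_cod)
      (auto simp: x0_dom_def x0_cod_def zip_prefixed)
  show "maps_rigidly_list (prefix_map (prefixed w x0_cod) (prefixed w x0_dom))
      (prefixed w (prefixed [False] (prefixed [False] A @ prefixed [True] B) @ prefixed [True] C))
      (prefixed w (prefixed [False] A @ prefixed [True] (prefixed [False] B @ prefixed [True] C)))"
    using maps_rigidly_list_prefixed[OF r, of _ _ A] maps_rigidly_list_prefixed[OF r, of _ _ B]
      maps_rigidly_list_prefixed[OF r, of _ _ C]
    by (simp add: maps_rigidly_list_app)
  have c: "complete_code (prefixed [False] (prefixed [False] A @ prefixed [True] B) @ prefixed [True] C)"
    using assms by (intro complete_code.intros)
  then show "prefix_free (prefixed w (prefixed [False] (prefixed [False] A @ prefixed [True] B) @ prefixed [True] C))"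
    by (rule prefix_free_code_prefixed)
  show "prefix_map (prefixed w x0_cod) (prefixed w x0_dom) x = x"
    if "x \<notin> cover (prefixed w (prefixed [False] (prefixed [False] A @ prefixed [True] B) @ prefixed [True] C))" for x
    using that unfolding cover_prefixed_code[OF c] by (rule prefix_map_prefixed_out)
qed simp

fun comb :: "nat \<Rightarrow> bool list list" where
  "comb 0 = [[]]"
| "comb (Suc k) = prefixed [False] [[]] @ prefixed [True] (comb k)"

lemma code_comb: "complete_code (comb k)"
proof (induction k)
  case (Suc k)
  then show ?case using complete_code.node[OF complete_code.leaf Suc.IH] by simp
qed (simp add: complete_code.leaf)

lemma length_comb [simp]: "length (comb k) = Suc k"
  by (induction k) auto

lemma graft_comb_T_span:
  "prefix_map (prefixed w (prefixed [False] (comb a) @ prefixed [True] (comb b)))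
              (prefixed w (comb (Suc (a + b)))) \<in> T_span"
proof (induction a arbitrary: w)
  case 0
  show ?case
    using prefix_map_id[OF prefix_free_code_prefixed[OF code_comb[of "Suc b"]], of w] T_span_id
    by (simp add: id_def)
next
  case (Suc a)
  let ?B = "prefixed [False] (comb a) @ prefixed [True] (comb b)"
  let ?R = "prefixed [False] [[]] @ prefixed [True] ?B"
  have cB: "complete_code ?B" and cR: "complete_code ?R"
    by (intro complete_code.intros code_comb)+
  have "prefix_map (prefixed w (prefixed [False] (comb (Suc a)) @ prefixed [True] (comb b))) (prefixed w ?R)
      = inv (x0_at w)"
    using rotation_eq_inv_x0_at[OF complete_code.leaf code_comb code_comb] by simp
  then have step1: "prefix_map (prefixed w (prefixed [False] (comb (Suc a)) @ prefixed [True] (comb b)))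
      (prefixed w ?R) \<in> T_span"
    using T_span_inv[OF x0_at_T_span] by simp
  have step2: "prefix_map (prefixed w ?R) (prefixed w (comb (Suc (Suc a + b)))) \<in> T_span"
  proof -
    have "prefix_map (prefixed w ?R) (prefixed w (comb (Suc (Suc a + b))))
        = prefix_map (prefixed (w @ [False]) [[]]) (prefixed (w @ [False]) [[]])
          \<circ> prefix_map (prefixed (w @ [True]) ?B) (prefixed (w @ [True]) (comb (Suc (a + b))))"
      using prefix_map_node[of "[[]]" ?B "[[]]" "comb (Suc (a + b))" w] code_prefix_free[OF cB]
      by simp
    then show ?thesis using Suc.IH[of "w @ [True]"] prefix_map_id[of "[w @ [False]]"] by simp
  qed
  have "complete_code (prefixed [False] (comb (Suc a)) @ prefixed [True] (comb b))"
    by (intro complete_code.node code_comb)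
  from T_span_prefix_map_trans[OF this cR _ _ step1 step2] show ?case by simp
qed

lemma code_to_comb_T_span:
  assumes "complete_code P"
  shows "prefix_map (prefixed w P) (prefixed w (comb (length P - 1))) \<in> T_span"
  using assms
proof (induction arbitrary: w rule: complete_code.induct)
  case leaf
  show ?case using T_span_id prefix_map_id[of "[w]"] by (simp add: id_def)
next
  case (node P Q)
  obtain a b where a: "length P = Suc a" and b: "length Q = Suc b"
    using code_nonempty[OF node.hyps(1)] code_nonempty[OF node.hyps(2)]
    by (metis length_greater_0_conv Suc_pred)
  have "prefix_map (prefixed w (prefixed [False] P @ prefixed [True] Q))
                   (prefixed w (prefixed [False] (comb a) @ prefixed [True] (comb b)))
      = prefix_map (prefixed (w @ [False]) P) (prefixed (w @ [False]) (comb a))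
        \<circ> prefix_map (prefixed (w @ [True]) Q) (prefixed (w @ [True]) (comb b))"
    using node.hyps a b by (intro prefix_map_node) (simp_all add: code_prefix_free)
  moreover have "prefix_map (prefixed (w @ [False]) P) (prefixed (w @ [False]) (comb a)) \<in> T_span"
    using node.IH(1)[of "w @ [False]"] a by simp
  moreover have "prefix_map (prefixed (w @ [True]) Q) (prefixed (w @ [True]) (comb b)) \<in> T_span"
    using node.IH(2)[of "w @ [True]"] b by simp
  ultimately have step1: "prefix_map (prefixed w (prefixed [False] P @ prefixed [True] Q))
                   (prefixed w (prefixed [False] (comb a) @ prefixed [True] (comb b))) \<in> T_span"
    by (simp add: T_span_comp)
  have "complete_code (prefixed [False] P @ prefixed [True] Q)"
    using node.hyps by (rule complete_code.node)
  from T_span_prefix_map_trans[OF this complete_code.node[OF code_comb code_comb] _ _ step1 graft_comb_T_span]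
  show ?case using a b by simp
qed

lemma code_prefix_map_T_span:
  assumes "complete_code P" "complete_code Q" "length P = length Q"
  shows "prefix_map P Q \<in> T_span"
proof -
  let ?V = "comb (length P - 1)"
  have lV: "length ?V = length P" using code_nonempty[OF assms(1)] by simp
  have "prefix_map P ?V \<in> T_span" using code_to_comb_T_span[OF assms(1), of "[]"] by simp
  moreover have "prefix_map ?V Q \<in> T_span"
  proof -
    have "inv (prefix_map Q ?V) = prefix_map ?V Q"
      using assms lV by (intro prefix_map_inv) (simp_all add: code_prefix_free code_cover code_comb)
    then show ?thesis
      using T_span_inv code_to_comb_T_span[OF assms(2), of "[]"] assms(3) by fastforce
  qed
  ultimately show ?thesis
    using T_span_prefix_map_trans[OF assms(1) code_comb, where w = "[]"] assms lV by simp
qed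

lemma uniform_level:
  assumes "locally_rigid v"
  shows "\<exists>N. \<forall>d. length d = N \<longrightarrow> (\<exists>r. maps_rigidly v d r)"
proof -
  define W where "W = {w. \<exists>r. maps_rigidly v w r}"
  have op: "\<forall>U\<in>cone ` W. openin cantor_top U" using open_cone by blast
  have cov: "topspace cantor_top \<subseteq> \<Union>(cone ` W)"
  proof
    fix x assume "x \<in> topspace cantor_top"
    obtain w1 w2 where "x \<in> cone w1" "maps_rigidly v w1 w2" using assms unfolding locally_rigid_def by meson
    then show "x \<in> \<Union>(cone ` W)" unfolding W_def by blast
  qed
  obtain F where F: "finite F" "F \<subseteq> cone ` W" "topspace cantor_top \<subseteq> \<Union>F"
    using compact_cantor[unfolded compact_space_alt] op cov by meson
  obtain W' where W': "W' \<subseteq> W" "finite W'" "F = cone ` W'"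
    using finite_subset_image[OF F(1,2)] by blast
  define N where "N = Max (insert 0 (length ` W'))"
  have "\<forall>d. length d = N \<longrightarrow> (\<exists>r. maps_rigidly v d r)"
  proof (intro allI impI)
    fix d :: "bool list" assume d: "length d = N"
    have "cat d zeros \<in> \<Union>F" using F(3) by auto
    then obtain w where w: "w \<in> W'" "cat d zeros \<in> cone w" using W'(3) by auto
    have "length w \<le> N" unfolding N_def using w(1) W'(2) by (auto intro: Max_ge)
    then have "w = take (length w) d" using cones_meet_prefix[OF w(2) cat_in_cone] d by simp
    then have de: "d = w @ drop (length w) d" by (metis append_take_drop_id)
    obtain r where "maps_rigidly v w r" using w(1) W'(1) by (auto simp: W_def)
    then have "maps_rigidly v (w @ drop (length w) d) (r @ drop (length w) d)" by (rule maps_rigidly_append)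
    then show "\<exists>r. maps_rigidly v d r" using de by metis
  qed
  then show ?thesis by blast
qed

fun level :: "nat \<Rightarrow> bool list list" where
  "level 0 = [[]]"
| "level (Suc n) = prefixed [False] (level n) @ prefixed [True] (level n)"

lemma code_level: "complete_code (level n)"
  by (induction n) (auto intro: complete_code.intros)

lemma level_length: "d \<in> set (level n) \<Longrightarrow> length d = n"
  by (induction n arbitrary: d) (auto simp: prefixed_def)

lemma level_nonempty: "level n \<noteq> []"
  using code_nonempty code_level by blast

lemma level_0: "level n ! 0 = replicate n False"
proof (induction n)
  case 0 then show ?case by simp
next
  case (Suc n)
  have "level n \<noteq> []" by (rule level_nonempty)
  then show ?case using Suc by (simp add: prefixed_def nth_append)
qed

lemma cat_zeros: "zeros \<in> cone p \<Longrightarrow> cat p zeros = zeros"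
proof -
  assume "zeros \<in> cone p"
  then have "cat p (sdrop (length p) zeros) = zeros" by (rule cat_sdrop)
  moreover have "sdrop (length p) zeros = zeros" by (simp add: sdrop_def zeros_def)
  ultimately show ?thesis by simp
qed

lemma zeros_cone_rep: "zeros \<in> cone (replicate n False)"
  by (simp add: cone_iff zeros_def)

lemma sorted_split:
  assumes "sorted_wrt P xs" "\<And>a b. a \<in> set xs \<Longrightarrow> b \<in> set xs \<Longrightarrow> A a \<Longrightarrow> \<not> A b \<Longrightarrow> \<not> P a b"
  shows "xs = filter (\<lambda>x. \<not> A x) xs @ filter A xs"
  using assms
proof (induction xs)
  case Nil then show ?case by simp
next
  case (Cons x xs)
  have IH: "xs = filter (\<lambda>x. \<not> A x) xs @ filter A xs" using Cons by auto
  show ?case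
  proof (cases "A x")
    case True
    have "\<forall>y\<in>set xs. A y" using Cons.prems True by auto
    then show ?thesis using True by simp
  next
    case False
    then show ?thesis using IH by simp
  qed
qed

lemma cone_less_prefixed_D: "cone_less (w @ p) (w @ q) \<Longrightarrow> cone_less p q"
  unfolding cone_less_def
  by (metis cat_in_cone_append_iff lex_less_cat)

lemma prefix_free_append_D: "prefix_free (A @ B) \<Longrightarrow> prefix_free A \<and> prefix_free B"
  by (auto simp: prefix_free_def)

lemma prefix_free_prefixed_D: "prefix_free (prefixed w X) \<Longrightarrow> prefix_free X"
proof -
  assume a: "prefix_free (prefixed w X)"
  have "distinct X" using a by (auto simp: prefix_free_def prefixed_def distinct_map)
  moreover have "cone p \<inter> cone q = {}" if "p \<in> set X" "q \<in> set X" "p \<noteq> q" for p q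
  proof (rule ccontr)
    assume "cone p \<inter> cone q \<noteq> {}"
    then obtain x where "x \<in> cone p" "x \<in> cone q" by blast
    then have "cat w x \<in> cone (w @ p)" "cat w x \<in> cone (w @ q)" by simp_all
    moreover have "w @ p \<in> set (prefixed w X)" "w @ q \<in> set (prefixed w X)" "w @ p \<noteq> w @ q"
      using that by (auto simp: prefixed_def)
    ultimately show False using a unfolding prefix_free_def by blast
  qed
  ultimately show ?thesis by (simp add: prefix_free_def)
qed

lemma sum_length_prefixed: "sum_list (map length (prefixed w X)) = sum_list (map length X) + length w * length X"
  by (induction X) (auto simp: prefixed_def)

lemma prefix_free_Nil_mem:
  assumes "prefix_free R" "[] \<in> set R"
  shows "R = [[]]"
proof -
  have all: "p = []" if "p \<in> set R" for p
  proof (rule ccontr)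
    assume "p \<noteq> []"
    then have "cone p \<inter> cone [] = {}" using assms that unfolding prefix_free_def by blast
    then show False using cone_nonempty by simp
  qed
  then have set_R: "set R = {[]}" using assms(2) by blast
  then have "length R = 1" using distinct_card[of R] assms(1) by (simp add: prefix_free_def)
  then obtain x where "R = [x]" by (metis One_nat_def length_0_conv length_Suc_conv)
  then show ?thesis using set_R by simp
qed

lemma sorted_split_by_head:
  assumes "sorted_wrt cone_less R" "[] \<notin> set R"
  shows "R = prefixed [False] (map tl (filter (\<lambda>p. \<not> hd p) R)) @ prefixed [True] (map tl (filter hd R))"
proof -
  have hd_tl: "hd p # tl p = p" if "p \<in> set R" for p
  proof -
    have "p \<noteq> []" using that assms(2) by auto
    then show ?thesis by simp
  qed
  have "prefixed [b] (map tl (filter (\<lambda>p. hd p = b) R)) = filter (\<lambda>p. hd p = b) R" for b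
    unfolding prefixed_def map_map
  proof (rule map_idI)
    fix p assume "p \<in> set (filter (\<lambda>p. hd p = b) R)"
    then have "p \<in> set R" "hd p = b" by simp_all
    then show "((@) [b] \<circ> tl) p = p" using hd_tl[of p] by simp
  qed
  from this[of False] this[of True]
  have e: "prefixed [False] (map tl (filter (\<lambda>p. \<not> hd p) R)) = filter (\<lambda>p. \<not> hd p) R"
    "prefixed [True] (map tl (filter hd R)) = filter hd R"
    by simp_all
  have "\<not> cone_less a b" if "a \<in> set R" "b \<in> set R" "hd a" "\<not> hd b" for a b
  proof
    assume "cone_less a b"
    then have "lex_less (cat a zeros) (cat b zeros)" by (simp add: cone_less_def)
    moreover have "a \<noteq> []" "b \<noteq> []" using that(1,2) assms(2) by auto
    then have "cat b zeros \<in> cone [False]" "cat a zeros \<in> cone [True]"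
      using that(3,4) by (simp_all add: cone_iff cat_def hd_conv_nth)
    then have "lex_less (cat b zeros) (cat a zeros)" using lex_less_split'[of _ "[]"] by simp
    ultimately show False using lex_less_asym by blast
  qed
  then have "R = filter (\<lambda>p. \<not> hd p) R @ filter hd R" by (rule sorted_split[OF assms(1)])
  then show ?thesis unfolding e .
qed

lemma cover_node_D:
  assumes "cover (prefixed [False] R0 @ prefixed [True] R1) = UNIV"
  shows "cover R0 = UNIV" "cover R1 = UNIV"
proof -
  have "y \<in> cover R0" for y
  proof -
    have "cat [False] y \<in> cover (prefixed [False] R0) \<union> cover (prefixed [True] R1)" using assms by simp
    moreover have "cat [False] y \<notin> cover (prefixed [True] R1)"
      using cover_prefixed_sub[of "[True]" R1] cone_False_notin_True[of "cat [False] y" "[]"] by auto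
    ultimately show ?thesis by simp
  qed
  then show "cover R0 = UNIV" by blast
  have "y \<in> cover R1" for y
  proof -
    have "cat [True] y \<in> cover (prefixed [False] R0) \<union> cover (prefixed [True] R1)" using assms by simp
    moreover have "cat [True] y \<notin> cover (prefixed [False] R0)"
      using cover_prefixed_sub[of "[False]" R0] cone_False_notin_True[of _ "[]"] by fastforce
    ultimately show ?thesis by simp
  qed
  then show "cover R1 = UNIV" by blast
qed

lemma sorted_prefixed_D: "sorted_wrt cone_less (prefixed w R) \<Longrightarrow> sorted_wrt cone_less R"
  unfolding prefixed_def sorted_wrt_map
  by (metis (no_types, lifting) cone_less_prefixed_D sorted_wrt_mono_rel)

lemma code_of_sorted:
  "sorted_wrt cone_less R \<Longrightarrow> prefix_free R \<Longrightarrow> cover R = UNIV \<Longrightarrow> complete_code R"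
proof (induction "sum_list (map length R)" arbitrary: R rule: less_induct)
  case less
  show ?case
  proof (cases "[] \<in> set R")
    case True
    then show ?thesis using prefix_free_Nil_mem[OF less.prems(2) True] complete_code.leaf by simp
  next
    case False
    define R0 where "R0 = map tl (filter (\<lambda>p. \<not> hd p) R)"
    define R1 where "R1 = map tl (filter hd R)"
    have R: "R = prefixed [False] R0 @ prefixed [True] R1"
      unfolding R0_def R1_def using sorted_split_by_head[OF less.prems(1) False] .
    have "cover (prefixed [False] R0 @ prefixed [True] R1) = UNIV" using less.prems(3) R by simp
    note cov = cover_node_D[OF this]
    have "sum_list (map length R) = sum_list (map length R0) + length R0 + sum_list (map length R1) + length R1"
      by (subst R) (simp add: sum_length_prefixed)
    moreover have "R0 \<noteq> []" "R1 \<noteq> []" using cov by auto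
    ultimately have shorter: "sum_list (map length R0) < sum_list (map length R)"
        "sum_list (map length R1) < sum_list (map length R)"
      by simp_all
    have "sorted_wrt cone_less (prefixed [False] R0)" "sorted_wrt cone_less (prefixed [True] R1)"
      using less.prems(1) by (subst (asm) R, simp add: sorted_wrt_append)+
    then have "sorted_wrt cone_less R0" "sorted_wrt cone_less R1" by (simp_all add: sorted_prefixed_D)
    moreover have "prefix_free (prefixed [False] R0)" "prefix_free (prefixed [True] R1)"
      using less.prems(2) prefix_free_append_D[of "prefixed [False] R0" "prefixed [True] R1"] R by simp_all
    then have "prefix_free R0" "prefix_free R1" by (simp_all add: prefix_free_prefixed_D)
    ultimately have "complete_code R0" "complete_code R1"
      using less.hyps[OF shorter(1)] less.hyps[OF shorter(2)] cov by simp_all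
    then show ?thesis using R complete_code.node by simp
  qed
qed

lemma mono_of_zeros:
  assumes "u \<in> ThompsonT" "u zeros = zeros" "lex_less x y"
  shows "lex_less (u x) (u y)"
proof -
  have inj: "inj u" using assms(1) ThompsonT_bij bij_is_inj by blast
  show ?thesis
  proof (cases "x = zeros")
    case True
    then have "y \<noteq> zeros" using assms(3) by auto
    then have "u y \<noteq> zeros" using inj assms(2) by (metis injD)
    then show ?thesis using True assms(2) zeros_least by simp
  next
    case False
    then have "lex_less zeros x" by (rule zeros_least)
    then have "cyc zeros x y" using assms(3) by (simp add: cyc_def)
    then have "cyc zeros (u x) (u y)" using ThompsonT_cyc_preserving[OF assms(1)] assms(2) unfolding cyc_preserving_def by metis
    moreover have "\<not> lex_less z zeros" for z by (auto simp: lex_less_def zeros_def)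
    ultimately show ?thesis unfolding cyc_def by blast
  qed
qed

lemma prefix_map_rotate1_conj:
  assumes "prefix_free D" "prefix_free E" "cover D = UNIV" "cover E = UNIV" "length D = length E"
  shows "prefix_map D (rotate1 D) = prefix_map E D \<circ> prefix_map E (rotate1 E) \<circ> prefix_map D E"
proof -
  have "prefix_map E (rotate1 E) \<circ> prefix_map D E = prefix_map D (rotate1 E)"
    by (rule prefix_map_comp) (use assms in auto)
  moreover have "prefix_map (rotate1 E) (rotate1 D) \<circ> prefix_map D (rotate1 E) = prefix_map D (rotate1 D)"
    by (rule prefix_map_comp) (use assms in auto)
  moreover have "prefix_map (rotate1 E) (rotate1 D) = prefix_map E D"
    using prefix_map_rotate[of E D 1] assms(5) by simp
  ultimately show ?thesis by (simp add: comp_assoc)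
qed

lemma c0_eq_prefix_map:
  "c0 = prefix_map (prefixed [False] (comb k) @ [[True]]) (rotate1 (comb (Suc k)))"
proof (rule sym, rule prefix_map_eqI)
  have c: "complete_code (prefixed [False] (comb k) @ prefixed [True] [[]])"
    by (intro complete_code.intros code_comb)
  then show "prefix_free (prefixed [False] (comb k) @ [[True]])"
    using code_prefix_free by fastforce
  show "maps_rigidly_list c0 (prefixed [False] (comb k) @ [[True]]) (rotate1 (comb (Suc k)))"
    using maps_rigidly_list_prefixed[OF c0_rigid[of False, simplified], of "comb k"]
      maps_rigidly_list_prefixed[OF c0_rigid[of True, simplified], of "[[]]"]
    by (simp add: maps_rigidly_list_app)
  show "c0 x = x" if "x \<notin> cover (prefixed [False] (comb k) @ [[True]])" for x
    using that code_cover[OF c] by (simp add: set_eq_iff) blast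
qed simp

lemma rotate1_T_span:
  assumes "complete_code D"
  shows "prefix_map D (rotate1 D) \<in> T_span"
proof (cases "length D = 1")
  case True
  then obtain d where "D = [d]" by (metis One_nat_def length_0_conv length_Suc_conv)
  then show ?thesis using prefix_map_id[of "[d]"] T_span_id by simp
next
  case False
  then obtain k where k: "length D = Suc (Suc k)" using code_nonempty[OF assms]
    by (metis One_nat_def Suc_pred length_greater_0_conv not0_implies_Suc)
  define E where "E = prefixed [False] (comb k) @ [[True]]"
  define V where "V = comb (Suc k)"
  have cE: "complete_code E"
    using complete_code.node[OF code_comb complete_code.leaf] by (simp add: E_def)
  have cV: "complete_code V" unfolding V_def by (rule code_comb)
  have l: "length E = Suc (Suc k)" "length V = Suc (Suc k)" by (simp_all add: E_def V_def)
  have "prefix_map (rotate1 V) (rotate1 E) \<circ> prefix_map E (rotate1 V) = prefix_map E (rotate1 E)"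
    using cE cV l by (intro prefix_map_comp) (simp_all add: code_prefix_free code_cover)
  moreover have "prefix_map (rotate1 V) (rotate1 E) = prefix_map V E"
    using prefix_map_rotate[of V E 1] l by simp
  moreover have "prefix_map E (rotate1 V) = c0"
    unfolding E_def V_def by (rule c0_eq_prefix_map[symmetric])
  ultimately have "prefix_map E (rotate1 E) \<in> T_span"
    using code_prefix_map_T_span[OF cV cE] l T_span_comp T_span_gens(3) by metis
  moreover have "prefix_map D (rotate1 D) = prefix_map E D \<circ> prefix_map E (rotate1 E) \<circ> prefix_map D E"
    using assms cE k l by (intro prefix_map_rotate1_conj) (simp_all add: code_prefix_free code_cover)
  ultimately show ?thesis
    using code_prefix_map_T_span[OF cE assms] code_prefix_map_T_span[OF assms cE] k l T_span_comp
    by simp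
qed

lemma rotate_T_span:
  assumes "complete_code D"
  shows "prefix_map D (rotate k D) \<in> T_span"
proof (induction k)
  case 0
  then show ?case using prefix_map_id[OF code_prefix_free[OF assms]] T_span_id by (simp add: id_def)
next
  case (Suc k)
  have "prefix_map (rotate k D) (rotate (Suc k) D) \<circ> prefix_map D (rotate k D) = prefix_map D (rotate (Suc k) D)"
    using code_prefix_free[OF assms] by (intro prefix_map_comp) auto
  moreover have "prefix_map (rotate k D) (rotate (Suc k) D) = prefix_map D (rotate1 D)"
    using prefix_map_rotate[of D "rotate1 D" k] by (simp add: rotate1_rotate_swap)
  ultimately show ?case using rotate1_T_span[OF assms] Suc T_span_comp by metis
qed

lemma locally_rigid_eq_prefix_map_level:
  assumes "locally_rigid v"
  obtains N R where "length R = length (level N)" "v = prefix_map (level N) R"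
proof -
  obtain N where N: "\<forall>d. length d = N \<longrightarrow> (\<exists>r. maps_rigidly v d r)"
    using uniform_level[OF assms] by blast
  define r where "r d = (SOME r. maps_rigidly v d r)" for d
  have rig: "maps_rigidly v d (r d)" if "d \<in> set (level N)" for d
    unfolding r_def using N level_length[OF that] by (metis someI_ex)
  have "prefix_map (level N) (map r (level N)) = v"
  proof (rule prefix_map_eqI)
    show "prefix_free (level N)" using code_level by (rule code_prefix_free)
    show "maps_rigidly_list v (level N) (map r (level N))"
      unfolding maps_rigidly_list_def by (auto simp: zip_map2 rig zip_same_conv_map)
    show "v x = x" if "x \<notin> cover (level N)" for x
      using that code_cover[OF code_level] by simp
  qed simp
  then show thesis using that[of "map r (level N)" N] by simp
qed

lemma prefix_free_of_inj_prefix_map: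
  assumes "inj (prefix_map D R)" "prefix_free D" "length D = length R"
  shows "prefix_free R"
proof -
  have disj: "cone (R ! i) \<inter> cone (R ! j) = {}" if "i < length R" "j < length R" "i \<noteq> j" for i j
  proof (rule ccontr)
    assume "cone (R ! i) \<inter> cone (R ! j) \<noteq> {}"
    then obtain x where x: "x \<in> cone (R ! i)" "x \<in> cone (R ! j)" by blast
    have "prefix_map D R (cat (D ! i) (sdrop (length (R ! i)) x))
        = prefix_map D R (cat (D ! j) (sdrop (length (R ! j)) x))"
      using prefix_map_rigid_nth[OF assms(2,3)] that x by (simp add: cat_sdrop assms(3))
    then have "cat (D ! i) (sdrop (length (R ! i)) x) = cat (D ! j) (sdrop (length (R ! j)) x)"
      by (rule injD[OF assms(1)])
    then have "cone (D ! i) \<inter> cone (D ! j) \<noteq> {}" by (metis IntI cat_in_cone empty_iff)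
    moreover have "D ! i \<noteq> D ! j"
      using that assms(2,3) by (simp add: prefix_free_def nth_eq_iff_index_eq)
    ultimately show False
      using that assms(2,3) unfolding prefix_free_def by (metis nth_mem)
  qed
  have "distinct R"
  proof (rule distinct_conv_nth[THEN iffD2], intro allI impI)
    fix i j assume "i < length R" "j < length R" "i \<noteq> j"
    then show "R ! i \<noteq> R ! j" using disj[of i j] cone_nonempty by auto
  qed
  moreover have "cone p \<inter> cone q = {}" if "p \<in> set R" "q \<in> set R" "p \<noteq> q" for p q
    using that disj by (metis in_set_conv_nth)
  ultimately show ?thesis by (simp add: prefix_free_def)
qed

lemma cover_of_surj_prefix_map:
  assumes "surj (prefix_map D R)" "prefix_free D" "cover D = UNIV" "length D = length R"
  shows "cover R = UNIV"
proof -
  have "x \<in> cover R" for x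
  proof -
    obtain z where z: "x = prefix_map D R z" using assms(1) by (metis surjD)
    obtain i where i: "i < length D" "z \<in> cone (D ! i)"
      using assms(3) unfolding cover_def by (metis UNIV_I UN_E in_set_conv_nth)
    then have "x = cat (R ! i) (sdrop (length (D ! i)) z)"
      using prefix_map_rigid_nth[OF assms(2,4) i(1)] z by (metis cat_sdrop)
    then show ?thesis using i(1) assms(4) unfolding cover_def by (metis UN_iff cat_in_cone nth_mem)
  qed
  then show ?thesis by blast
qed

lemma sorted_of_mono_prefix_map:
  assumes "complete_code D" "length D = length R"
    and "\<And>x y. lex_less x y \<Longrightarrow> lex_less (prefix_map D R x) (prefix_map D R y)"
  shows "sorted_wrt cone_less R"
  unfolding sorted_wrt_iff_nth_less cone_less_def
proof (intro allI impI ballI)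
  fix i j x y assume ij: "i < j" "j < length R" and x: "x \<in> cone (R ! i)" and y: "y \<in> cone (R ! j)"
  have pD: "prefix_free D" using assms(1) by (rule code_prefix_free)
  define a where "a = cat (D ! i) (sdrop (length (R ! i)) x)"
  define b where "b = cat (D ! j) (sdrop (length (R ! j)) y)"
  have "prefix_map D R a = x"
    using prefix_map_rigid_nth[OF pD assms(2)] ij x assms(2) by (simp add: a_def cat_sdrop)
  moreover have "prefix_map D R b = y"
    using prefix_map_rigid_nth[OF pD assms(2)] ij y assms(2) by (simp add: b_def cat_sdrop)
  moreover have "cone_less (D ! i) (D ! j)"
    using code_sorted[OF assms(1)] ij assms(2) by (simp add: sorted_wrt_iff_nth_less)
  then have "lex_less a b" by (simp add: cone_less_def a_def b_def)
  ultimately show "lex_less x y" using assms(3) by blast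
qed

text \<open>An element of \<open>T\<close> fixing \<open>0\<^sup>\<omega>\<close> preserves the linear order, so it sends the leaves of a
  complete code in order to the leaves of another complete code.\<close>

lemma prefix_map_fixing_zeros_T_span:
  assumes "complete_code D" "length D = length R" "prefix_free R" "cover R = UNIV"
    and "prefix_map D R \<in> ThompsonT" "prefix_map D R zeros = zeros"
  shows "prefix_map D R \<in> T_span"
proof -
  have "sorted_wrt cone_less R"
    using assms(1,2) mono_of_zeros[OF assms(5,6)] by (rule sorted_of_mono_prefix_map)
  then have "complete_code R" using assms(3,4) by (rule code_of_sorted)
  with assms(1) show ?thesis using assms(2) by (rule code_prefix_map_T_span)
qed

theorem ThompsonT_subset_T_span:
  assumes v: "v \<in> ThompsonT"
  shows "v \<in> T_span"
proof -
  obtain N R where lR: "length R = length (level N)" and vD: "v = prefix_map (level N) R"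
    using locally_rigid_eq_prefix_map_level[OF ThompsonT_locally_rigid[OF v]] by blast
  define D where "D = level N"
  have cD: "complete_code D" and pD: "prefix_free D" and uD: "cover D = UNIV"
    unfolding D_def using code_level code_prefix_free code_cover by blast+
  have bv: "bij v" using ThompsonT_bij[OF v] .
  have pR: "prefix_free R"
    using bij_is_inj[OF bv] pD lR[symmetric] unfolding vD D_def by (rule prefix_free_of_inj_prefix_map)
  have uR: "cover R = UNIV"
    using bij_is_surj[OF bv] pD uD lR[symmetric] unfolding vD D_def by (rule cover_of_surj_prefix_map)
  obtain k where k: "k < length R" "zeros \<in> cone (R ! k)"
    using uR unfolding cover_def by (metis UNIV_I UN_E in_set_conv_nth)
  define \<psi> where "\<psi> = prefix_map D (rotate k D)"
  have \<psi>: "\<psi> \<in> T_span" unfolding \<psi>_def by (rule rotate_T_span[OF cD])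
  define u where "u = prefix_map D (rotate k R)"
  have u_eq: "u = v \<circ> \<psi>"
  proof -
    have "prefix_map (rotate k D) (rotate k R) \<circ> \<psi> = u"
      unfolding \<psi>_def u_def by (rule prefix_map_comp) (use pD lR in \<open>auto simp: D_def\<close>)
    moreover have "prefix_map (rotate k D) (rotate k R) = v"
      using lR by (simp add: vD D_def prefix_map_rotate)
    ultimately show ?thesis by simp
  qed
  have "u zeros = zeros"
  proof -
    have "0 < length D" using level_nonempty by (simp add: D_def)
    moreover have "zeros = cat (D ! 0) zeros" using cat_zeros[OF zeros_cone_rep] by (simp add: D_def level_0)
    ultimately have "u zeros = cat (rotate k R ! 0) zeros"
      using prefix_map_rigid_nth[OF pD, of "rotate k R" 0 zeros] lR by (simp add: u_def D_def)
    also have "rotate k R ! 0 = R ! k" using k(1) nth_rotate[of 0 R k] by (cases R) simp_all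
    finally show ?thesis using cat_zeros[OF k(2)] by simp
  qed
  moreover have "u \<in> ThompsonT"
    unfolding u_eq using v T_span_subset_ThompsonT \<psi> by (intro ThompsonT_comp) auto
  ultimately have "u \<in> T_span"
    unfolding u_def using cD pR uR lR by (intro prefix_map_fixing_zeros_T_span) (simp_all add: D_def)
  moreover have "v = u \<circ> inv \<psi>"
    using u_eq bij_is_surj[OF T_span_bij[OF \<psi>]] by (simp add: surj_iff comp_assoc)
  ultimately show ?thesis using T_span_comp[OF _ T_span_inv[OF \<psi>]] by simp
qed

theorem ThompsonT_generated: "generates T_gens ThompsonT"
  unfolding generates_def
proof
  show "T_gens \<subseteq> ThompsonT" by (rule T_gens_subset_ThompsonT)
  show "\<forall>g\<in>ThompsonT. \<exists>ws\<in>words_over T_gens. eval_word ws = g"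
    using ThompsonT_subset_T_span unfolding T_span_def generated_def by blast
qed

lemma finite_T_gens: "finite T_gens"
  by (simp add: T_gens_def)

section \<open>Elements of \<open>T\<close> supported on the rungs \<open>0\<^sup>i1\<close>\<close>

lemma cat_ones: "ones \<in> cone p \<Longrightarrow> cat p ones = ones"
proof -
  assume "ones \<in> cone p"
  then have "cat p (sdrop (length p) ones) = ones" by (rule cat_sdrop)
  moreover have "sdrop (length p) ones = ones" by (simp add: sdrop_def ones_def)
  ultimately show ?thesis by simp
qed

lemma x0_F: "x0 (cat [False] y) = cat [False, False] y"
  using x0_rigid(1) by (simp add: maps_rigidly_def)
lemma x0_TF: "x0 (cat [True, False] y) = cat [False, True] y"
  using x0_rigid(2) by (simp add: maps_rigidly_def)
lemma x0_TT: "x0 (cat [True, True] y) = cat [True] y"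
  using x0_rigid(3) by (simp add: maps_rigidly_def)

lemma lex_less_cat_False:
  assumes "z \<noteq> zeros" shows "lex_less (cat [False] z) z"
proof -
  have ex: "\<exists>i. z i" using assms by (auto simp: zeros_def fun_eq_iff)
  define n where "n = (LEAST i. z i)"
  have zn: "z n" unfolding n_def by (rule LeastI_ex[OF ex])
  have below: "\<not> z i" if "i < n" for i using that not_less_Least n_def by blast
  show ?thesis unfolding lex_less_def
  proof (intro exI[of _ n] conjI allI impI)
    fix i assume "i < n"
    then show "cat [False] z i = z i" using below by (cases i) (auto simp: cat_def)
  next
    show "\<not> cat [False] z n" using below by (cases n) (auto simp: cat_def)
  qed (rule zn)
qed

lemma lex_less_cat_True:
  assumes "z \<noteq> ones" shows "lex_less z (cat [True] z)"
proof -
  have ex: "\<exists>i. \<not> z i" using assms by (auto simp: ones_def fun_eq_iff)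
  define n where "n = (LEAST i. \<not> z i)"
  have zn: "\<not> z n" unfolding n_def by (rule LeastI_ex[OF ex])
  have below: "z i" if "i < n" for i using that not_less_Least n_def by blast
  show ?thesis unfolding lex_less_def
  proof (intro exI[of _ n] conjI allI impI)
    fix i assume "i < n"
    then show "z i = cat [True] z i" using below by (cases i) (auto simp: cat_def)
  next
    show "cat [True] z n" using below by (cases n) (auto simp: cat_def)
  qed (rule zn)
qed

lemma zeros_F: "cat [False] zeros = zeros" by (rule cat_zeros) (simp add: cone_iff zeros_def)
lemma ones_T: "cat [True] ones = ones" by (rule cat_ones) (simp add: cone_iff ones_def)

lemma x0_zeros: "x0 zeros = zeros"
  using x0_F[of zeros] zeros_F by (metis cat_Cons)

lemma x0_ones: "x0 ones = ones"
  using x0_TT[of ones] ones_T by (metis cat_Cons)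

lemma cantor_cases3:
  obtains z where "y = cat [False] z" | z where "y = cat [True, False] z" | z where "y = cat [True, True] z"
proof -
  have c: "y \<in> cone w \<Longrightarrow> \<exists>z. y = cat w z" for w using cat_sdrop by metis
  consider "\<not> y 0" | "y 0" "\<not> y 1" | "y 0" "y 1" by blast
  then show ?thesis
  proof cases
    case 1 then have "y \<in> cone [False]" by (simp add: cone_iff)
    then show ?thesis using that c by blast
  next
    case 2 then have "y \<in> cone [True, False]" by (auto simp: cone_iff less_Suc_eq numeral_2_eq_2)
    then show ?thesis using that c by blast
  next
    case 3 then have "y \<in> cone [True, True]" by (auto simp: cone_iff less_Suc_eq numeral_2_eq_2)
    then show ?thesis using that c by blast
  qed
qed

lemma x0_lex_less:
  assumes "y \<noteq> zeros" "y \<noteq> ones"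
  shows "lex_less (x0 y) y"
proof (cases y rule: cantor_cases3)
  case (1 z)
  then have "z \<noteq> zeros" using assms zeros_F by auto
  then have "lex_less (cat [False] (cat [False] z)) (cat [False] z)" using lex_less_cat_False by simp
  then show ?thesis using 1 x0_F by (metis cat_Cons)
next
  case (2 z)
  have "x0 y \<in> cone ([] @ [False])" using 2 x0_TF by (metis append_Nil cat_Cons cat_in_cone)
  moreover have "y \<in> cone ([] @ [True])" using 2 by (metis append_Nil cat_Cons cat_in_cone)
  ultimately show ?thesis by (rule lex_less_split')
next
  case (3 z)
  then have "z \<noteq> ones" using assms ones_T by (metis cat_Cons)
  then have "lex_less (cat [True] z) (cat [True] (cat [True] z))" using lex_less_cat_True by simp
  then show ?thesis using 3 x0_TT by (metis cat_Cons)
qed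

lemma bij_x0: "bij x0" using T_span_bij T_span_gens(1) by blast

definition x0_pm :: "bool \<Rightarrow> cantor \<Rightarrow> cantor" where
  "x0_pm b = (if b then x0 else inv x0)"

lemma inv_x0_zeros: "inv x0 zeros = zeros" using x0_zeros bij_x0 by (metis bij_is_inj inv_f_f)
lemma inv_x0_ones: "inv x0 ones = ones" using x0_ones bij_x0 by (metis bij_is_inj inv_f_f)

lemma x0_pm_zeros [simp]: "x0_pm b zeros = zeros" by (simp add: x0_pm_def x0_zeros inv_x0_zeros)
lemma x0_pm_ones [simp]: "x0_pm b ones = ones" by (simp add: x0_pm_def x0_ones inv_x0_ones)

lemma x0_pm_bij: "bij (x0_pm b)" by (simp add: x0_pm_def bij_x0 bij_imp_bij_inv)

lemma x0_pm_lex_less: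
  assumes "y \<noteq> zeros" "y \<noteq> ones"
  shows "(b \<longrightarrow> lex_less (x0_pm b y) y) \<and> (\<not> b \<longrightarrow> lex_less y (x0_pm b y))"
proof (cases b)
  case True then show ?thesis using x0_lex_less[OF assms] by (simp add: x0_pm_def)
next
  case False
  define z where "z = inv x0 y"
  have xz: "x0 z = y" unfolding z_def using bij_x0 by (simp add: bij_is_surj surj_f_inv_f)
  have "z \<noteq> zeros" "z \<noteq> ones" using xz assms x0_zeros x0_ones by auto
  then have "lex_less y z" using x0_lex_less xz by metis
  then show ?thesis using False by (simp add: x0_pm_def z_def)
qed

lemma x0_pm_fix_iff: "x0_pm b y = y \<longleftrightarrow> y = zeros \<or> y = ones"
proof
  assume e: "x0_pm b y = y"
  show "y = zeros \<or> y = ones"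
  proof (rule ccontr)
    assume "\<not> (y = zeros \<or> y = ones)"
    then have "(b \<longrightarrow> lex_less (x0_pm b y) y) \<and> (\<not> b \<longrightarrow> lex_less y (x0_pm b y))" using x0_pm_lex_less by blast
    then show False using e by (cases b) auto
  qed
qed auto

lemma x0_pm_ne_zeros_ones: "y \<noteq> zeros \<Longrightarrow> y \<noteq> ones \<Longrightarrow> x0_pm b y \<noteq> zeros \<and> x0_pm b y \<noteq> ones"
  using x0_pm_bij[of b] by (metis x0_pm_ones x0_pm_zeros bij_is_inj injD)

definition rung :: "nat \<Rightarrow> bool list" where
  "rung i = replicate i False @ [True]"

definition rung_gen :: "bool \<Rightarrow> cantor \<Rightarrow> cantor" where
  "rung_gen b = (if b then x0_at [False, True] else inv (x0_at [False, True]))"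

text \<open>Conjugation by \<open>x0\<close> moves the rung \<open>i\<close> onto the rung \<open>i + 1\<close>, so \<open>rung_map u\<close> acts on
  the rung \<open>i\<close> as \<open>x0\<close> or \<open>x0\<^sup>-\<^sup>1\<close> according to \<open>u ! (i - 1)\<close> and as the identity elsewhere.\<close>

fun rung_map :: "bool list \<Rightarrow> cantor \<Rightarrow> cantor" where
  "rung_map [] = id"
| "rung_map (b # u) = rung_gen b \<circ> x0 \<circ> rung_map u \<circ> inv x0"

lemma x0_prefix_map: "x0 = prefix_map x0_dom x0_cod" by (simp add: x0_def x0_at_def)

lemma x0_at_in: "x0_at w (cat w y) = cat w (x0 y)"
  unfolding x0_at_def x0_prefix_map by (rule prefix_map_prefixed_in[OF prefix_free_x0_dom]) simp

lemma x0_at_out: "x \<notin> cone w \<Longrightarrow> x0_at w x = x"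
  unfolding x0_at_def by (rule prefix_map_prefixed_out)

lemma inv_x0_prefix_map: "inv x0 = prefix_map x0_cod x0_dom"
  using inv_x0_at[of "[]"] by (simp add: x0_def)

lemma inv_x0_at_in: "inv (x0_at w) (cat w y) = cat w (inv x0 y)"
  unfolding inv_x0_at inv_x0_prefix_map by (rule prefix_map_prefixed_in[OF prefix_free_x0_cod]) simp

lemma inv_x0_at_out: "x \<notin> cone w \<Longrightarrow> inv (x0_at w) x = x"
  unfolding inv_x0_at by (rule prefix_map_prefixed_out)

lemma rung_1: "rung 1 = [False, True]" by (simp add: rung_def)
lemma rung_Suc_0: "rung (Suc 0) = [False, True]" by (simp add: rung_def)

lemma rung_gen_in: "rung_gen b (cat (rung 1) y) = cat (rung 1) (x0_pm b y)"
  unfolding rung_gen_def x0_pm_def rung_1 by (cases b) (simp_all add: x0_at_in inv_x0_at_in)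

lemma rung_gen_out: "x \<notin> cone (rung 1) \<Longrightarrow> rung_gen b x = x"
  unfolding rung_gen_def rung_1 by (cases b) (simp_all add: x0_at_out inv_x0_at_out)

lemma rung_Suc: "1 \<le> i \<Longrightarrow> rung i = [False] @ (replicate (i - 1) False @ [True])"
  by (cases i) (auto simp: rung_def)

lemma rung_Suc_Suc: "1 \<le> i \<Longrightarrow> rung (Suc i) = [False, False] @ (replicate (i - 1) False @ [True])"
  by (cases i) (auto simp: rung_def)

lemma x0_rung: "1 \<le> i \<Longrightarrow> x0 (cat (rung i) y) = cat (rung (Suc i)) y"
proof -
  assume i: "1 \<le> i"
  have "x0 (cat ([False] @ r) y) = cat ([False, False] @ r) y" for r
    using maps_rigidly_append[OF x0_rigid(1), of r] by (simp add: maps_rigidly_def)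
  then show ?thesis using rung_Suc[OF i] rung_Suc_Suc[OF i] by metis
qed

lemma inv_x0_rung: "1 \<le> i \<Longrightarrow> inv x0 (cat (rung (Suc i)) y) = cat (rung i) y"
  using x0_rung bij_x0 by (metis bij_is_inj inv_f_f)

lemma inv_x0_FT: "inv x0 (cat [False, True] y) = cat [True, False] y"
  using x0_TF bij_x0 by (metis bij_is_inj inv_f_f)

lemma rung_order:
  assumes "j < i" "a \<in> cone (rung i)" "b \<in> cone (rung j)"
  shows "lex_less a b"
proof -
  obtain k where k: "i = Suc (j + k)" using assms(1) less_iff_Suc_add by auto
  have "rung i = replicate j False @ [False] @ (replicate k False @ [True])"
  proof -
    have "replicate i False = replicate j False @ replicate (Suc k) False"
      using k replicate_add[of j "Suc k" False] by simp
    then show ?thesis by (simp add: rung_def)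
  qed
  moreover have "rung j = replicate j False @ [True] @ []" by (simp add: rung_def)
  ultimately show ?thesis using assms(2,3) lex_less_split by metis
qed

lemma rung_disj: "i \<noteq> j \<Longrightarrow> x \<in> cone (rung i) \<Longrightarrow> x \<notin> cone (rung j)"
proof
  assume "i \<noteq> j" "x \<in> cone (rung i)" "x \<in> cone (rung j)"
  then consider "i < j" | "j < i" by linarith
  then show False
  proof cases
    case 1 then show False using rung_order[OF 1 \<open>x \<in> cone (rung j)\<close> \<open>x \<in> cone (rung i)\<close>] by simp
  next
    case 2 then show False using rung_order[OF 2 \<open>x \<in> cone (rung i)\<close> \<open>x \<in> cone (rung j)\<close>] by simp
  qed
qed

lemma rung_head: "1 \<le> j \<Longrightarrow> x \<in> cone (rung j) \<Longrightarrow> x 0 = False"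
  using cone_at[of x "[]" False] rung_Suc by fastforce

lemma TF_not_rung: "1 \<le> j \<Longrightarrow> cat [True, False] y \<notin> cone (rung j)"
proof
  assume "1 \<le> j" "cat [True, False] y \<in> cone (rung j)"
  then have "cat [True, False] y 0 = False" using rung_head by blast
  then show False by (simp add: cat_def)
qed

lemma rung_Suc_not_in_rung_1: "1 \<le> j \<Longrightarrow> cat (rung (Suc j)) y \<notin> cone (rung 1)"
  using rung_disj[of "Suc j" 1 "cat (rung (Suc j)) y"] by simp

lemma rung_map_in_out:
  "(\<forall>i y. 1 \<le> i \<and> i \<le> length u \<longrightarrow> rung_map u (cat (rung i) y) = cat (rung i) (x0_pm (u ! (i - 1)) y)) \<and>
   (\<forall>x. (\<forall>i. 1 \<le> i \<and> i \<le> length u \<longrightarrow> x \<notin> cone (rung i)) \<longrightarrow> rung_map u x = x)"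
proof (induction u)
  case Nil then show ?case by simp
next
  case (Cons b u)
  have IN: "rung_map u (cat (rung i) y) = cat (rung i) (x0_pm (u ! (i - 1)) y)" if "1 \<le> i" "i \<le> length u" for i y
    using Cons.IH that by blast
  have OUT: "rung_map u x = x" if "\<forall>i. 1 \<le> i \<and> i \<le> length u \<longrightarrow> x \<notin> cone (rung i)" for x
    using Cons.IH that by blast
  have ix: "x0 (inv x0 x) = x" for x using bij_x0 by (simp add: bij_is_surj surj_f_inv_f)
  have A: "rung_map (b # u) (cat (rung i) y) = cat (rung i) (x0_pm ((b # u) ! (i - 1)) y)"
    if H: "1 \<le> i" "i \<le> length (b # u)" for i y
  proof (cases "i = 1")
    case True
    have "inv x0 (cat (rung i) y) = cat [True, False] y" using True inv_x0_FT by (simp add: rung_1 rung_Suc_0)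
    moreover have "rung_map u (cat [True, False] y) = cat [True, False] y" by (rule OUT) (simp add: TF_not_rung)
    ultimately show ?thesis using True x0_TF rung_gen_in[unfolded rung_1] by (simp add: rung_1 rung_Suc_0)
  next
    case False
    then obtain j where j: "i = Suc j" "1 \<le> j" "j \<le> length u" using H by (cases i) auto
    have "rung_map (b # u) (cat (rung i) y) = rung_gen b (x0 (rung_map u (inv x0 (cat (rung (Suc j)) y))))" using j by simp
    also have "\<dots> = rung_gen b (x0 (cat (rung j) (x0_pm (u ! (j - 1)) y)))" using inv_x0_rung[OF j(2)] IN[OF j(2,3)] by simp
    also have "\<dots> = cat (rung (Suc j)) (x0_pm (u ! (j - 1)) y)" using x0_rung[OF j(2)] rung_gen_out rung_Suc_not_in_rung_1[OF j(2)] by simp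
    finally show ?thesis using j by (cases j) auto
  qed
  have B: "rung_map (b # u) x = x" if "\<forall>i. 1 \<le> i \<and> i \<le> length (b # u) \<longrightarrow> x \<notin> cone (rung i)" for x
  proof -
    have "inv x0 x \<notin> cone (rung j)" if "1 \<le> j" "j \<le> length u" for j
    proof
      assume "inv x0 x \<in> cone (rung j)"
      then have "inv x0 x = cat (rung j) (sdrop (length (rung j)) (inv x0 x))" by (simp add: cat_sdrop)
      then have "x = cat (rung (Suc j)) (sdrop (length (rung j)) (inv x0 x))" using x0_rung[OF that(1)] ix by metis
      then have "x \<in> cone (rung (Suc j))" by (metis cat_in_cone)
      then show False using \<open>\<forall>i. 1 \<le> i \<and> i \<le> length (b # u) \<longrightarrow> x \<notin> cone (rung i)\<close> that by auto
    qed
    then have "rung_map u (inv x0 x) = inv x0 x" using OUT by blast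
    moreover have "x \<notin> cone (rung 1)" using \<open>\<forall>i. 1 \<le> i \<and> i \<le> length (b # u) \<longrightarrow> x \<notin> cone (rung i)\<close> by auto
    ultimately show ?thesis using ix rung_gen_out by simp
  qed
  show ?case using A B by blast
qed

lemma rung_map_in: "1 \<le> i \<Longrightarrow> i \<le> length u \<Longrightarrow> rung_map u (cat (rung i) y) = cat (rung i) (x0_pm (u ! (i - 1)) y)"
  using rung_map_in_out by blast

lemma rung_map_out: "(\<And>i. 1 \<le> i \<Longrightarrow> i \<le> length u \<Longrightarrow> x \<notin> cone (rung i)) \<Longrightarrow> rung_map u x = x"
  using rung_map_in_out by blast

lemma rung_gen_T_span: "rung_gen b \<in> T_span"
  unfolding rung_gen_def using x0_at_T_span T_span_inv by auto

lemma rung_map_T_span: "rung_map u \<in> T_span"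
proof (induction u)
  case Nil then show ?case by (metis T_span_id rung_map.simps(1))
next
  case (Cons b u)
  have "inv x0 \<in> T_span" using T_span_inv T_span_gens(1) by blast
  then show ?case using Cons rung_gen_T_span T_span_gens(1) T_span_comp by (metis rung_map.simps(2))
qed

lemma rung_map_T: "rung_map u \<in> ThompsonT"
  using rung_map_T_span T_span_subset_ThompsonT by blast

section \<open>Conjugacy invariants\<close>

text \<open>Both notions only refer to fixed points and the cyclic order, so conjugation in \<open>T\<close>
  preserves them.\<close>

definition moves_down :: "(cantor \<Rightarrow> cantor) \<Rightarrow> cantor \<Rightarrow> bool" where
  "moves_down g x \<longleftrightarrow> (\<forall>p. g p = p \<longrightarrow> cyc (g x) x p)"

definition unseparated :: "(cantor \<Rightarrow> cantor) \<Rightarrow> cantor \<Rightarrow> cantor \<Rightarrow> bool" where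
  "unseparated g x y \<longleftrightarrow> (\<forall>p. g p = p \<longrightarrow> \<not> cyc x p y) \<or> (\<forall>p. g p = p \<longrightarrow> \<not> cyc y p x)"

lemma conj_apply: "bij h \<Longrightarrow> (h \<circ> g \<circ> inv h) (h x) = h (g x)"
  by (simp add: bij_is_inj)

lemma fixed_points_conj:
  assumes "bij h"
  shows "{p. (h \<circ> g \<circ> inv h) p = p} = h ` {q. g q = q}"
proof
  show "{p. (h \<circ> g \<circ> inv h) p = p} \<subseteq> h ` {q. g q = q}"
  proof
    fix p assume "p \<in> {p. (h \<circ> g \<circ> inv h) p = p}"
    then have "g (inv h p) = inv h p" using assms by (simp add: bij_inv_eq_iff)
    moreover have "p = h (inv h p)" using assms by (simp add: bij_is_surj surj_f_inv_f)
    ultimately show "p \<in> h ` {q. g q = q}" by blast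
  qed
  show "h ` {q. g q = q} \<subseteq> {p. (h \<circ> g \<circ> inv h) p = p}"
    using conj_apply[OF assms] by auto
qed

lemma forall_fixed_points_conj:
  assumes "bij h"
  shows "(\<forall>p. (h \<circ> g \<circ> inv h) p = p \<longrightarrow> Q p) \<longleftrightarrow> (\<forall>q. g q = q \<longrightarrow> Q (h q))"
  using fixed_points_conj[OF assms, of g] by (auto simp: set_eq_iff image_iff)

lemma moves_down_conj:
  assumes "bij h" "cyc_preserving h"
  shows "moves_down (h \<circ> g \<circ> inv h) (h x) \<longleftrightarrow> moves_down g x"
  unfolding moves_down_def conj_apply[OF assms(1)] forall_fixed_points_conj[OF assms(1)]
  using cyc_preserving_iff[OF bij_is_inj[OF assms(1)] assms(2)] by simp

lemma unseparated_conj: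
  assumes "bij h" "cyc_preserving h"
  shows "unseparated (h \<circ> g \<circ> inv h) (h x) (h y) \<longleftrightarrow> unseparated g x y"
  unfolding unseparated_def forall_fixed_points_conj[OF assms(1)]
  using cyc_preserving_iff[OF bij_is_inj[OF assms(1)] assms(2)] by simp

lemma rung_map_fix_in:
  assumes "rung_map u p = p" "p \<in> cone (rung i)" "1 \<le> i" "i \<le> length u"
  shows "p = cat (rung i) zeros \<or> p = cat (rung i) ones"
proof -
  define y where "y = sdrop (length (rung i)) p"
  have pe: "p = cat (rung i) y" using assms(2) by (simp add: y_def cat_sdrop)
  then have "cat (rung i) (x0_pm (u ! (i - 1)) y) = cat (rung i) y" using assms rung_map_in by metis
  then have "x0_pm (u ! (i - 1)) y = y" by simp
  then have "y = zeros \<or> y = ones" using x0_pm_fix_iff by blast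
  then show ?thesis using pe by auto
qed

lemma rung_map_supp:
  assumes "rung_map u x \<noteq> x"
  shows "\<exists>i y. 1 \<le> i \<and> i \<le> length u \<and> x = cat (rung i) y \<and> y \<noteq> zeros \<and> y \<noteq> ones"
proof -
  obtain i where i: "1 \<le> i" "i \<le> length u" "x \<in> cone (rung i)"
    using assms rung_map_out by blast
  define y where "y = sdrop (length (rung i)) x"
  have xe: "x = cat (rung i) y" using i(3) by (simp add: y_def cat_sdrop)
  have "y \<noteq> zeros \<and> y \<noteq> ones"
  proof (rule ccontr)
    assume "\<not> (y \<noteq> zeros \<and> y \<noteq> ones)"
    then have "x0_pm (u ! (i - 1)) y = y" using x0_pm_fix_iff by blast
    then have "rung_map u x = x" using xe rung_map_in[OF i(1,2)] by simp
    then show False using assms by simp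
  qed
  then show ?thesis using i xe by blast
qed

lemma rung_map_moves:
  assumes "1 \<le> i" "i \<le> length u" "y \<noteq> zeros" "y \<noteq> ones"
  shows "rung_map u (cat (rung i) y) \<noteq> cat (rung i) y"
  using rung_map_in[OF assms(1,2)] x0_pm_fix_iff assms(3,4) by simp

lemma lex_less_rung_iff:
  assumes "i \<noteq> j" "a \<in> cone (rung i)" "b \<in> cone (rung j)"
  shows "lex_less a b \<longleftrightarrow> j < i"
proof
  assume "lex_less a b"
  show "j < i"
  proof (rule ccontr)
    assume "\<not> j < i"
    then have "i < j" using assms(1) by simp
    then have "lex_less b a" using rung_order assms(2,3) by blast
    then show False using \<open>lex_less a b\<close> lex_less_asym by blast
  qed
qed (use rung_order assms in blast)

lemma moves_down_rung_map:
  assumes "1 \<le> i" "i \<le> length u" "y \<noteq> zeros" "y \<noteq> ones"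
  shows "moves_down (rung_map u) (cat (rung i) y) \<longleftrightarrow> u ! (i - 1)"
proof -
  define b where "b = u ! (i - 1)"
  define x where "x = cat (rung i) y"
  have gx: "rung_map u x = cat (rung i) (x0_pm b y)" using rung_map_in[OF assms(1,2)] by (simp add: x_def b_def)
  have mv: "(b \<longrightarrow> lex_less (x0_pm b y) y) \<and> (\<not> b \<longrightarrow> lex_less y (x0_pm b y))" using x0_pm_lex_less[OF assms(3,4)] .
  have ne: "x0_pm b y \<noteq> zeros" "x0_pm b y \<noteq> ones" using x0_pm_ne_zeros_ones[OF assms(3,4)] by auto
  show ?thesis
  proof (cases b)
    case True
    have lt: "lex_less (rung_map u x) x" using gx mv True by (simp add: x_def)
    have "cyc (rung_map u x) x p" if fp: "rung_map u p = p" for p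
    proof (cases "p \<in> cone (rung i)")
      case True
      then have "p = cat (rung i) zeros \<or> p = cat (rung i) ones" using rung_map_fix_in fp assms by blast
      then show ?thesis
      proof
        assume "p = cat (rung i) zeros"
        then have "lex_less p (rung_map u x)" using gx ne zeros_least by simp
        then show ?thesis using lt by (simp add: cyc_def)
      next
        assume "p = cat (rung i) ones"
        then have "lex_less x p" using assms(4) ones_greatest by (simp add: x_def)
        then show ?thesis using lt by (simp add: cyc_def)
      qed
    next
      case False
      have "rung_map u x \<in> cone (rung i)" "x \<in> cone (rung i)" using gx by (simp_all add: x_def)
      then show ?thesis using cone_outside[OF False] lt unfolding cyc_def by blast
    qed
    then show ?thesis using True by (simp add: moves_down_def x_def b_def)
  next
    case False
    have lt: "lex_less x (rung_map u x)" using gx mv False by (simp add: x_def)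
    define p where "p = cat (rung i) zeros"
    have fp: "rung_map u p = p" using rung_map_in[OF assms(1,2)] by (simp add: p_def)
    have "lex_less p x" using assms(3) zeros_least by (simp add: p_def x_def)
    then have "\<not> cyc (rung_map u x) x p" using lt unfolding cyc_def using lex_less_asym by blast
    then show ?thesis using False fp by (auto simp: moves_down_def x_def b_def)
  qed
qed

lemma unseparated_same_rung:
  assumes "1 \<le> i" "i \<le> length u" "a \<noteq> zeros" "a \<noteq> ones" "b \<noteq> zeros" "b \<noteq> ones"
  shows "unseparated (rung_map u) (cat (rung i) a) (cat (rung i) b)"
proof -
  have no_fixed_between: "\<not> cyc x p y"
    if "rung_map u p = p" "lex_less x y" "x \<in> cone (rung i)" "y \<in> cone (rung i)"
      "x \<noteq> cat (rung i) zeros" "y \<noteq> cat (rung i) ones" for x y p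
  proof
    assume "cyc x p y"
    then have xp: "lex_less x p" and py: "lex_less p y"
      using that(2) lex_less_asym unfolding cyc_def by blast+
    have "p \<in> cone (rung i)" using cone_interval[OF that(3,4) xp py] .
    then have "p = cat (rung i) zeros \<or> p = cat (rung i) ones"
      using rung_map_fix_in that(1) assms(1,2) by blast
    moreover have "lex_less (cat (rung i) zeros) x" using cone_min that(3,5) by blast
    moreover have "lex_less y (cat (rung i) ones)" using cone_max that(4,6) by blast
    ultimately show False using xp py lex_less_trans lex_less_irrefl by metis
  qed
  let ?x = "cat (rung i) a" and ?y = "cat (rung i) b"
  consider "?x = ?y" | "lex_less ?x ?y" | "lex_less ?y ?x" using lex_less_total by blast
  then show ?thesis
  proof cases
    case 1
    then show ?thesis unfolding unseparated_def using cyc_distinct by blast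
  next
    case 2
    then show ?thesis unfolding unseparated_def using no_fixed_between[of _ ?x ?y] assms by simp
  next
    case 3
    then show ?thesis unfolding unseparated_def using no_fixed_between[of _ ?y ?x] assms by simp
  qed
qed

text \<open>The end points of the rung \<open>i\<close> are fixed points separating it from every other rung.\<close>

lemma separated_rungs:
  assumes "j < i" "1 \<le> i" "i \<le> length u" "a \<noteq> zeros" "a \<noteq> ones"
  shows "\<not> unseparated (rung_map u) (cat (rung i) a) (cat (rung j) b)"
proof -
  let ?x = "cat (rung i) a" and ?y = "cat (rung j) b"
  let ?q0 = "cat (rung i) zeros" and ?q1 = "cat (rung i) ones"
  have "rung_map u ?q0 = ?q0" "rung_map u ?q1 = ?q1" using rung_map_in[OF assms(2,3)] by simp_all
  moreover have "lex_less ?x ?y" "lex_less ?q1 ?y" using rung_order[OF assms(1)] by simp_all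
  moreover have "lex_less ?x ?q1" "lex_less ?q0 ?x"
    using assms(4,5) ones_greatest zeros_least by simp_all
  ultimately show ?thesis unfolding unseparated_def cyc_def by blast
qed

lemma unseparated_rung_map:
  assumes "1 \<le> i" "i \<le> length u" "a \<noteq> zeros" "a \<noteq> ones"
    and "1 \<le> j" "j \<le> length u" "b \<noteq> zeros" "b \<noteq> ones"
  shows "unseparated (rung_map u) (cat (rung i) a) (cat (rung j) b) \<longleftrightarrow> i = j"
proof
  assume s: "unseparated (rung_map u) (cat (rung i) a) (cat (rung j) b)"
  moreover have "unseparated (rung_map u) (cat (rung j) b) (cat (rung i) a)"
    using s unfolding unseparated_def by blast
  ultimately show "i = j"
    using separated_rungs[of j i u a b] separated_rungs[of i j u b a] assms by (metis linorder_neqE_nat)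
qed (use unseparated_same_rung assms in blast)

lemma cyc_rung_map:
  assumes "i \<noteq> j" "j \<noteq> k" "i \<noteq> k"
  shows "cyc (cat (rung i) a) (cat (rung j) b) (cat (rung k) c) \<longleftrightarrow> cyc_desc i j k"
proof -
  have 1: "lex_less (cat (rung i) a) (cat (rung j) b) \<longleftrightarrow> j < i" using lex_less_rung_iff assms by simp
  have 2: "lex_less (cat (rung j) b) (cat (rung k) c) \<longleftrightarrow> k < j" using lex_less_rung_iff assms by simp
  have 3: "lex_less (cat (rung k) c) (cat (rung i) a) \<longleftrightarrow> i < k" using lex_less_rung_iff assms by simp
  show ?thesis unfolding cyc_def 1 2 3 cyc_desc_def ..
qed

section \<open>Counting conjugacy classes\<close>

definition half_point :: cantor where "half_point = cat [True] zeros"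

lemma half_point_ne: "half_point \<noteq> zeros" "half_point \<noteq> ones"
proof -
  have "half_point 0 \<noteq> zeros 0" "half_point 1 \<noteq> ones 1"
    by (simp_all add: half_point_def cat_def zeros_def ones_def)
  then show "half_point \<noteq> zeros" "half_point \<noteq> ones" by auto
qed

lemma conj_rung_map_moved_point:
  assumes "length v = n" "bij h" "rung_map v = h \<circ> rung_map u \<circ> inv h"
    and "1 \<le> i" "i \<le> length u" "y \<noteq> zeros" "y \<noteq> ones"
  shows "\<exists>j y'. 1 \<le> j \<and> j \<le> n \<and> h (cat (rung i) y) = cat (rung j) y' \<and> y' \<noteq> zeros \<and> y' \<noteq> ones"
proof -
  have "rung_map v (h (cat (rung i) y)) = h (rung_map u (cat (rung i) y))"
    using conj_apply[OF assms(2)] assms(3) by simp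
  moreover have "rung_map u (cat (rung i) y) \<noteq> cat (rung i) y" using rung_map_moves assms(4-7) .
  ultimately have "rung_map v (h (cat (rung i) y)) \<noteq> h (cat (rung i) y)"
    using assms(2) by (metis bij_is_inj injD)
  then show ?thesis using rung_map_supp assms(1) by blast
qed

text \<open>A conjugator carries the moved points of the rung \<open>i\<close> into a single rung \<open>p i\<close>; the
  induced map \<open>p\<close> preserves the cyclic order, and the direction of motion carries the sign along.\<close>

lemma conj_perm:
  assumes "length u = n" "length v = n" "h \<in> ThompsonT" "rung_map v = h \<circ> rung_map u \<circ> inv h"
  shows "\<exists>p. cyc_perm n p \<and> (\<forall>i\<in>{1..n}. v ! (p i - 1) = u ! (i - 1))"
proof -
  have bh: "bij h" and ch: "cyc_preserving h"
    using assms(3) ThompsonT_bij ThompsonT_cyc_preserving by blast+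
  define r where "r i = cat (rung i) half_point" for i
  have ex: "\<exists>j y. 1 \<le> j \<and> j \<le> n \<and> h (r i) = cat (rung j) y \<and> y \<noteq> zeros \<and> y \<noteq> ones"
    if "i \<in> {1..n}" for i
    using conj_rung_map_moved_point[OF assms(2) bh assms(4)] half_point_ne that assms(1) by (simp add: r_def)
  define p where "p i = (SOME j. \<exists>y. 1 \<le> j \<and> j \<le> n \<and> h (r i) = cat (rung j) y \<and> y \<noteq> zeros \<and> y \<noteq> ones)" for i
  define yy where "yy i = (SOME y. 1 \<le> p i \<and> p i \<le> n \<and> h (r i) = cat (rung (p i)) y \<and> y \<noteq> zeros \<and> y \<noteq> ones)" for i
  have P: "1 \<le> p i \<and> p i \<le> n \<and> h (r i) = cat (rung (p i)) (yy i) \<and> yy i \<noteq> zeros \<and> yy i \<noteq> ones"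
    if "i \<in> {1..n}" for i
  proof -
    have "\<exists>y. 1 \<le> p i \<and> p i \<le> n \<and> h (r i) = cat (rung (p i)) y \<and> y \<noteq> zeros \<and> y \<noteq> ones"
      unfolding p_def using someI_ex[OF ex[OF that]] by blast
    then show ?thesis unfolding yy_def by (rule someI_ex)
  qed
  have range: "\<forall>i\<in>{1..n}. p i \<in> {1..n}" using P by auto
  have moves_down: "v ! (p i - 1) = u ! (i - 1)" if "i \<in> {1..n}" for i
  proof -
    have "moves_down (rung_map v) (h (r i)) \<longleftrightarrow> moves_down (rung_map u) (r i)" unfolding assms(4) by (rule moves_down_conj[OF bh ch])
    moreover have "moves_down (rung_map u) (r i) \<longleftrightarrow> u ! (i - 1)"
      unfolding r_def using moves_down_rung_map half_point_ne that assms(1) by simp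
    moreover have "moves_down (rung_map v) (h (r i)) \<longleftrightarrow> v ! (p i - 1)"
      using moves_down_rung_map P[OF that] assms(2) by metis
    ultimately show ?thesis by blast
  qed
  have inj: "inj_on p {1..n}"
  proof (rule inj_onI)
    fix i j assume ij: "i \<in> {1..n}" "j \<in> {1..n}" "p i = p j"
    have "unseparated (rung_map v) (h (r i)) (h (r j))"
      using unseparated_rung_map[of "p i" v "yy i" "p j" "yy j"] P[OF ij(1)] P[OF ij(2)] ij(3) assms(2) by metis
    then have "unseparated (rung_map u) (r i) (r j)" using unseparated_conj[OF bh ch] assms(4) by simp
    then show "i = j" unfolding r_def using unseparated_rung_map half_point_ne ij assms(1) by simp
  qed
  have cp: "cyc_desc (p i) (p j) (p k)" if "i \<in> {1..n}" "j \<in> {1..n}" "k \<in> {1..n}" "cyc_desc i j k" for i j k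
  proof -
    have d: "i \<noteq> j" "j \<noteq> k" "i \<noteq> k" using that(4) by (auto simp: cyc_desc_def)
    have "cyc (r i) (r j) (r k)" unfolding r_def using cyc_rung_map[OF d] that(4) by simp
    then have "cyc (h (r i)) (h (r j)) (h (r k))" using ThompsonT_cyc_preserving[OF assms(3)] by (simp add: cyc_preserving_def)
    moreover have "p i \<noteq> p j" "p j \<noteq> p k" "p i \<noteq> p k" using inj d that(1-3) by (auto dest: inj_onD)
    ultimately show ?thesis using cyc_rung_map P[OF that(1)] P[OF that(2)] P[OF that(3)] by metis
  qed
  show ?thesis unfolding cyc_perm_def using range inj cp moves_down by blast
qed

lemma card_rung_maps_conjugate_le:
  assumes "length u = n" "1 \<le> n"
  shows "card {v. length v = n \<and> rung_map v \<in> conj_class ThompsonT (rung_map u)} \<le> n"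
    (is "card ?C \<le> n")
proof -
  have "\<forall>v\<in>?C. \<exists>p. cyc_perm n p \<and> (\<forall>i\<in>{1..n}. v ! (p i - 1) = u ! (i - 1))"
  proof
    fix v assume "v \<in> ?C"
    then obtain h where "h \<in> ThompsonT" "rung_map v = h \<circ> rung_map u \<circ> inv h"
      unfolding conj_class_def by blast
    then show "\<exists>p. cyc_perm n p \<and> (\<forall>i\<in>{1..n}. v ! (p i - 1) = u ! (i - 1))"
      using conj_perm[of u n v h] \<open>v \<in> ?C\<close> assms(1) by auto
  qed
  from bchoice[OF this] obtain P
    where "\<forall>v\<in>?C. cyc_perm n (P v) \<and> (\<forall>i\<in>{1..n}. v ! (P v i - 1) = u ! (i - 1))" ..
  then have P: "cyc_perm n (P v) \<and> (\<forall>i\<in>{1..n}. v ! (P v i - 1) = u ! (i - 1))" if "v \<in> ?C" for v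
    using that by (rule bspec)
  have "inj_on (\<lambda>v. P v 1) ?C"
  proof (rule inj_onI)
    fix v w assume v: "v \<in> ?C" and w: "w \<in> ?C" and e: "P v 1 = P w 1"
    have same: "\<forall>i\<in>{1..n}. P v i = P w i" using cyc_perm_unique P[OF v] P[OF w] e assms(2) by blast
    have onto: "P v ` {1..n} = {1..n}" using P[OF v] unfolding cyc_perm_def
      by (intro endo_inj_surj) auto
    show "v = w"
    proof (rule nth_equalityI)
      show "length v = length w" using v w by simp
      fix t assume "t < length v"
      then have "Suc t \<in> {1..n}" using v by simp
      then obtain i where i: "i \<in> {1..n}" "P v i = Suc t" using onto by (metis imageE)
      have "v ! t = u ! (i - 1)" using P[OF v] i by force
      moreover have "w ! t = u ! (i - 1)" using P[OF w] i same by force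
      ultimately show "v ! t = w ! t" by simp
    qed
  qed
  moreover have "(\<lambda>v. P v 1) ` ?C \<subseteq> {1..n}" using P assms(2) unfolding cyc_perm_def by auto
  ultimately have "card ?C \<le> card {1..n}" by (rule card_inj_on_le) simp
  then show ?thesis by simp
qed

lemma card_rung_maps_same_conj_class_le:
  assumes "length u = n" "1 \<le> n"
  shows "card {v. length v = n \<and> conj_class ThompsonT (rung_map v) = conj_class ThompsonT (rung_map u)} \<le> n"
proof -
  let ?C = "{v. length v = n \<and> rung_map v \<in> conj_class ThompsonT (rung_map u)}"
  have "{v. length v = n \<and> conj_class ThompsonT (rung_map v) = conj_class ThompsonT (rung_map u)} \<subseteq> ?C"
    using conj_class_self[OF ThompsonT_id] by fastforce
  moreover have "finite ?C"
    using finite_lists_length_eq[of "UNIV :: bool set" n] by (auto intro: rev_finite_subset)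
  ultimately have "card {v. length v = n \<and> conj_class ThompsonT (rung_map v) = conj_class ThompsonT (rung_map u)}
      \<le> card ?C"
    by (rule card_mono[rotated])
  also have "\<dots> \<le> n" using card_rung_maps_conjugate_le[OF assms] .
  finally show ?thesis .
qed

definition rung_map_cost :: "(cantor \<Rightarrow> cantor) set \<Rightarrow> nat" where
  "rung_map_cost S = word_length S (x0_at [False, True]) + word_length S (inv (x0_at [False, True]))
          + word_length S x0 + word_length S (inv x0)"

lemma word_length_rung_map:
  assumes "generates S ThompsonT"
  shows "word_length S (rung_map u) \<le> rung_map_cost S * length u"
proof (induction u)
  case Nil
  then show ?case using word_length_id[of S] by (simp add: id_def)
next
  case (Cons b u)
  have T: "rung_gen b \<in> ThompsonT" "x0 \<in> ThompsonT" "inv x0 \<in> ThompsonT" "rung_map u \<in> ThompsonT"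
    using rung_gen_T_span x0_T T_span_subset_ThompsonT ThompsonT_inv rung_map_T by blast+
  have "word_length S (rung_map (b # u)) \<le> word_length S (rung_gen b \<circ> x0 \<circ> rung_map u) + word_length S (inv x0)"
    using word_length_comp[OF assms _ T(3)] T ThompsonT_comp by simp
  moreover have "word_length S (rung_gen b \<circ> x0 \<circ> rung_map u) \<le> word_length S (rung_gen b \<circ> x0) + word_length S (rung_map u)"
    using word_length_comp[OF assms _ T(4)] T ThompsonT_comp by simp
  moreover have "word_length S (rung_gen b \<circ> x0) \<le> word_length S (rung_gen b) + word_length S x0"
    using word_length_comp[OF assms T(1,2)] .
  moreover have "word_length S (rung_gen b) \<le> word_length S (x0_at [False, True]) + word_length S (inv (x0_at [False, True]))"
    by (cases b) (simp_all add: rung_gen_def)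
  ultimately have "word_length S (rung_map (b # u)) \<le> rung_map_cost S + word_length S (rung_map u)"
    unfolding rung_map_cost_def rung_map.simps(2) by linarith
  then show ?case using Cons.IH by (simp del: rung_map.simps)
qed

theorem conj_growth_T_at_least_exponential:
  assumes "finite S" "generates S ThompsonT"
  shows "growth_le (\<lambda>n. 2 ^ n) (conj_growth ThompsonT S)"
proof (rule exponential_le_growth)
  show "mono (conj_growth ThompsonT S)" using conj_growth_mono[OF assms] by (rule monoI)
  fix n :: nat assume "1 \<le> n"
  let ?U = "{u :: bool list. length u = n}"
  have U: "?U = {u. set u \<subseteq> UNIV \<and> length u = n}" by simp
  have "card ?U = card (UNIV :: bool set) ^ n" unfolding U by (rule card_lists_length_eq) simp
  then have "2 ^ n = card ?U" by (simp add: card_UNIV_bool)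
  also have "\<dots> \<le> n * conj_growth ThompsonT S (rung_map_cost S * n)"
  proof (rule card_le_mult_conj_growth[OF assms])
    show "finite ?U" unfolding U by (rule finite_lists_length_eq) simp
    show "rung_map u \<in> word_ball ThompsonT S (rung_map_cost S * n)" if "u \<in> ?U" for u
      using that word_length_rung_map[OF assms(2), of u] rung_map_T by (simp add: word_ball_def)
    show "card {v \<in> ?U. conj_class ThompsonT (rung_map v) = conj_class ThompsonT (rung_map u)} \<le> n"
      if "u \<in> ?U" for u
      using card_rung_maps_same_conj_class_le[of u n] that \<open>1 \<le> n\<close> by simp
  qed
  finally show "2 ^ n \<le> n * conj_growth ThompsonT S (rung_map_cost S * n)" .
qed

theorem mainTheorem5:
  shows "(\<exists>S. finite S \<and> generates S ThompsonT) \<and>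
         (\<forall>S. finite S \<and> generates S ThompsonT \<longrightarrow>
              growth_equiv (conj_growth ThompsonT S) (\<lambda>n. 2 ^ n))"
proof
  show "\<exists>S. finite S \<and> generates S ThompsonT"
    using finite_T_gens ThompsonT_generated by blast
  show "\<forall>S. finite S \<and> generates S ThompsonT \<longrightarrow> growth_equiv (conj_growth ThompsonT S) (\<lambda>n. 2 ^ n)"
    unfolding growth_equiv_def
    using conj_growth_at_most_exponential conj_growth_T_at_least_exponential by blast
qed

end
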